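(* Let $X,Y$ be real $m\times n$ matrices with $\|X\|_\infty\le1$ and $\|Y\|_\infty\le1$. Let $q\ge1$ be such that $\|X\|_*\le q\sqrt{mn}$ and $\|Y\|_*\le q\sqrt{mn}$. Let $\varepsilon\in(0,1)$. Then there exist $m\times n$ matrices $A,B$ with a simultaneous block structure having at most $(20000q^6\varepsilon^{-10})^{5q^2\varepsilon^{-2}}$ blocks, and permutations $\pi$ of $\{1,\dots,m\}$ and $\tau$ of $\{1,\dots,n\}$, such that $\|X^{\pi,\tau}-A\|_{\bar F}\le\varepsilon$ and $\|Y^{\pi,\tau}-B\|_{\bar F}\le\varepsilon$. Moreover, $A,B$ can be chosen with $\|A\|_\infty\le1$ and $\|B\|_\infty\le1$.
   Context: $\|A\|_\infty=\max_{i,j}|a_{ij}|$; $\|A\|_*$ is the sum of singular values; $\|A\|_{\bar F}=\big(\frac1{mn}\sum_{i,j}a_{ij}^2\big)^{1/2}$. $X^{\pi,\tau}$ is the matrix with $(i,j)$ entry $x_{\pi(i)\tau(j)}$. A matrix is a block matrix if its entries are constant on rectangular blocks, i.e. the set of rows is partitioned into consecutive intervals and the set of columns into consecutive intervals, and the matrix is constant on each product of a row interval with a column interval (these products are the blocks). Two matrices have a simultaneous block structure if both are block matrices with respect to the same row and column partitions. *)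

theory Defs
  imports "Jordan_Normal_Form.Matrix" "Jordan_Normal_Form.Char_Poly"
    "HOL-Computational_Algebra.Polynomial" "HOL-Combinatorics.Permutations"
begin

definition max_norm :: "real mat \<Rightarrow> real" where
  "max_norm A = Max {\<bar>A $$ (i,j)\<bar> | i j. i < dim_row A \<and> j < dim_col A}"

definition singular_values :: "real mat \<Rightarrow> real multiset" where
  "singular_values A = image_mset sqrt (proots (char_poly (transpose_mat A * A)))"

definition nuclear_norm :: "real mat \<Rightarrow> real" where
  "nuclear_norm A = sum_mset (singular_values A)"

definition nfrob_norm :: "real mat \<Rightarrow> real" where
  "nfrob_norm A = sqrt ((\<Sum>i<dim_row A. \<Sum>j<dim_col A. (A $$ (i,j))^2)
                        / (real (dim_row A) * real (dim_col A)))"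

definition perm_mat :: "real mat \<Rightarrow> (nat \<Rightarrow> nat) \<Rightarrow> (nat \<Rightarrow> nat) \<Rightarrow> real mat" where
  "perm_mat X \<pi> \<tau> = mat (dim_row X) (dim_col X) (\<lambda>(i,j). X $$ (\<pi> i, \<tau> j))"

definition interval_partition :: "(nat \<Rightarrow> nat) \<Rightarrow> nat \<Rightarrow> nat \<Rightarrow> bool" where
  "interval_partition p k N \<longleftrightarrow> p 0 = 0 \<and> p k = N \<and> (\<forall>t<k. p t < p (Suc t))"

definition const_on_blocks :: "real mat \<Rightarrow> (nat \<Rightarrow> nat) \<Rightarrow> nat \<Rightarrow> (nat \<Rightarrow> nat) \<Rightarrow> nat \<Rightarrow> bool" where
  "const_on_blocks A r k c l \<longleftrightarrow>
     (\<forall>a<k. \<forall>b<l. \<forall>i i' j j'.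
        r a \<le> i \<and> i < r (Suc a) \<and> r a \<le> i' \<and> i' < r (Suc a) \<and>
        c b \<le> j \<and> j < c (Suc b) \<and> c b \<le> j' \<and> j' < c (Suc b)
        \<longrightarrow> A $$ (i,j) = A $$ (i',j'))"

definition simult_block_structure :: "real mat \<Rightarrow> real mat \<Rightarrow> nat \<Rightarrow> bool" where
  "simult_block_structure A B N \<longleftrightarrow>
     dim_row B = dim_row A \<and> dim_col B = dim_col A \<and>
     (\<exists>r k c l. interval_partition r k (dim_row A) \<and> interval_partition c l (dim_col A) \<and>
        k * l = N \<and> const_on_blocks A r k c l \<and> const_on_blocks B r k c l)"

end

theory Submission
  imports Defs
begin

(* Let v_k be an orthonormal eigenbasis of X^T X with eigenvalues lam_k, so that the nuclear norm
   of X is sum_k sqrt lam_k and X = sum_k (X v_k) v_k^T. Keeping only the terms with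
   lam_k >= t^2 m n leaves at most q/t of them (their square roots already use up the nuclear norm
   budget), and the discarded ones contribute sum lam_k <= sqrt (t^2 m n) sum sqrt lam_k <= t q m n
   to the squared Frobenius error. Rescaled, the kept row factors are bounded by 1 and the column
   factors by 1/t. Rounding them to fine grids changes every entry by at most eps/3, and clipping
   to [-1,1] does not increase the error. The resulting approximant depends on a row only through
   the vector of its rounded row factors, and on a column only through the vector of its rounded
   column factors. Doing this for X and Y at once and sorting the rows and the columns by their
   pairs of codes produces a common block structure with at most as many blocks as there are
   pairs of possible codes. *)

section \<open>Orthogonal diagonalization of real symmetric matrices\<close>

lemma index_mult_mat_sum:
  assumes "A \<in> carrier_mat n k" "B \<in> carrier_mat k l" "i < n" "j < l"
  shows "(A * B) $$ (i,j) = (\<Sum>x<k. A $$ (i,x) * B $$ (x,j))"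
  using assms by (simp add: scalar_prod_def atLeast0LessThan)

lemma index_mult_mat_vec_sum:
  assumes "A \<in> carrier_mat n k" "v \<in> carrier_vec k" "i < n"
  shows "(A *\<^sub>v v) $ i = (\<Sum>x<k. A $$ (i,x) * v $ x)"
  using assms by (simp add: scalar_prod_def atLeast0LessThan)

lemma symmetric_mat_index:
  assumes "S \<in> carrier_mat n n" "transpose_mat S = S" "i < n" "j < n"
  shows "S $$ (i,j) = S $$ (j,i)"
  using arg_cong[OF assms(2), of "\<lambda>M. M $$ (j,i)"] assms(1,3,4) by auto

lemma nonzero_vec_index:
  assumes "v \<in> carrier_vec n" "v \<noteq> 0\<^sub>v n"
  obtains i where "i < n" "v $ i \<noteq> 0"
  using assms by (metis carrier_vecD eq_vecI index_zero_vec(1,2))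

lemma real_symmetric_complex_eigenvalue_real:
  fixes S :: "real mat"
  assumes S: "S \<in> carrier_mat n n" "transpose_mat S = S"
    and z: "z \<in> carrier_vec n" "z \<noteq> 0\<^sub>v n"
    and ev: "map_mat complex_of_real S *\<^sub>v z = \<mu> \<cdot>\<^sub>v z"
  shows "cnj \<mu> = \<mu>"
proof -
  have ev_i: "(\<Sum>j<n. complex_of_real (S $$ (i,j)) * z $ j) = \<mu> * z $ i" if "i < n" for i
  proof -
    have "(map_mat complex_of_real S *\<^sub>v z) $ i = (\<mu> \<cdot>\<^sub>v z) $ i" using ev by simp
    thus ?thesis using that S z(1) by (simp add: scalar_prod_def atLeast0LessThan)
  qed
  define Q where "Q = (\<Sum>i<n. cnj (z $ i) * (\<Sum>j<n. complex_of_real (S $$ (i,j)) * z $ j))"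
  define P where "P = (\<Sum>i<n. cnj (z $ i) * z $ i)"
  have "Q = (\<Sum>i<n. cnj (z $ i) * (\<mu> * z $ i))" unfolding Q_def by (rule sum.cong) (auto simp: ev_i)
  hence Q_eq: "Q = \<mu> * P" unfolding P_def by (simp add: sum_distrib_left algebra_simps)
  \<comment> \<open>the Rayleigh quotient of a real symmetric matrix is real\<close>
  have "cnj Q = (\<Sum>i<n. \<Sum>j<n. z $ i * complex_of_real (S $$ (i,j)) * cnj (z $ j))"
    unfolding Q_def by (simp add: sum_distrib_left mult.assoc)
  also have "\<dots> = (\<Sum>j<n. \<Sum>i<n. z $ i * complex_of_real (S $$ (i,j)) * cnj (z $ j))"
    by (rule sum.swap)
  also have "\<dots> = Q" unfolding Q_def sum_distrib_left
    by (intro sum.cong refl) (simp add: symmetric_mat_index[OF S] mult.commute mult.left_commute)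
  finally have Q_real: "cnj Q = Q" .
  have P_eq: "P = complex_of_real (\<Sum>i<n. (cmod (z $ i))^2)"
    unfolding P_def of_real_sum by (intro sum.cong refl) (simp add: complex_norm_square[symmetric] mult.commute)
  obtain i0 where "i0 < n" "z $ i0 \<noteq> 0" using nonzero_vec_index[OF z] .
  hence "(\<Sum>i<n. (cmod (z $ i))^2) > 0" by (intro sum_pos2) auto
  hence P: "P \<noteq> 0" "cnj P = P" unfolding P_eq
    by (metis less_irrefl of_real_eq_0_iff) (rule complex_cnj_complex_of_real)
  have "cnj \<mu> * P = \<mu> * P" using Q_real Q_eq P(2) by (metis complex_cnj_mult)
  thus ?thesis using P(1) by simp
qed

lemma real_symmetric_unit_eigenvector:
  fixes S :: "real mat"
  assumes S: "S \<in> carrier_mat n n" "transpose_mat S = S" and n: "n > 0"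
  obtains \<mu> u where "u \<in> carrier_vec n" "(\<Sum>k<n. (u $ k)^2) = 1" "S *\<^sub>v u = \<mu> \<cdot>\<^sub>v u"
proof -
  let ?Sc = "map_mat complex_of_real S"
  have Sc: "?Sc \<in> carrier_mat n n" using S by auto
  obtain as where cp: "char_poly ?Sc = (\<Prod>a\<leftarrow>as. [:- a, 1:])" and len: "length as = n"
    using char_poly_factorized[OF Sc] by blast
  have "hd as \<in> set as" using len n by (cases as) auto
  hence root: "poly (char_poly ?Sc) (hd as) = 0" unfolding cp by (simp add: poly_prod_list_zero_iff)
  then obtain z where z: "z \<in> carrier_vec n" "z \<noteq> 0\<^sub>v n" "?Sc *\<^sub>v z = hd as \<cdot>\<^sub>v z"
    using eigenvalue_root_char_poly[OF Sc] Sc unfolding eigenvalue_def eigenvector_def by auto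
  have "hd as = complex_of_real (Re (hd as))"
    using real_symmetric_complex_eigenvalue_real[OF S z]
    by (metis Reals_cnj_iff complex_is_Real_iff of_real_Re)
  hence "poly (char_poly ?Sc) (complex_of_real (Re (hd as))) = 0" using root by simp
  hence "poly (char_poly S) (Re (hd as)) = 0"
    unfolding of_real_hom.char_poly_hom[OF S(1)] of_real_hom.poly_map_poly by simp
  then obtain v where v: "v \<in> carrier_vec n" "v \<noteq> 0\<^sub>v n" "S *\<^sub>v v = Re (hd as) \<cdot>\<^sub>v v"
    using eigenvalue_root_char_poly[OF S(1)] S(1) unfolding eigenvalue_def eigenvector_def by auto
  define s where "s = (\<Sum>k<n. (v $ k)^2)"
  obtain i0 where "i0 < n" "v $ i0 \<noteq> 0" using nonzero_vec_index[OF v(1,2)] .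
  hence s: "s > 0" unfolding s_def by (intro sum_pos2) auto
  define u where "u = (1 / sqrt s) \<cdot>\<^sub>v v"
  have "u \<in> carrier_vec n" unfolding u_def using v by auto
  moreover have "(\<Sum>k<n. (u $ k)^2) = (\<Sum>k<n. (v $ k)^2 / s)"
    by (intro sum.cong refl) (use v(1) s in \<open>auto simp: u_def power_divide\<close>)
  hence "(\<Sum>k<n. (u $ k)^2) = 1" using s unfolding s_def sum_divide_distrib[symmetric] by simp
  moreover have "S *\<^sub>v u = Re (hd as) \<cdot>\<^sub>v u" unfolding u_def using v S
    by (simp add: mult_mat_vec smult_smult_assoc mult.commute)
  ultimately show thesis using that by blast
qed

lemma reflection_involution:
  fixes w :: "nat \<Rightarrow> real"
  assumes c_w: "c * (\<Sum>k<N. (w k)^2) = 2 \<or> c = 0"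
  defines "H \<equiv> mat N N (\<lambda>(i,j). (if i = j then 1 else 0) - c * w i * w j)"
  shows "H * H = 1\<^sub>m N"
proof (rule eq_matI)
  fix i j assume "i < dim_row (1\<^sub>m N)" "j < dim_col (1\<^sub>m N)"
  hence i: "i < N" and j: "j < N" by auto
  have pt: "\<And>x. ((if i = x then 1 else 0) - c * w i * w x) * ((if x = j then 1 else 0) - c * w x * w j)
    = (if i = x then 1 else 0) * (if x = j then (1::real) else 0) - (if x = i then c * w x * w j else 0)
      - (if x = j then c * w i * w x else 0) + c * c * w i * w j * (w x)^2"
    by (auto simp: algebra_simps power2_eq_square)
  have "(H * H) $$ (i,j)
      = (\<Sum>x<N. ((if i = x then 1 else 0) - c * w i * w x) * ((if x = j then 1 else 0) - c * w x * w j))"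
    by (subst index_mult_mat_sum[of _ N N]) (use i j in \<open>auto simp: H_def\<close>)
  also have "\<dots> = (if i = j then 1 else 0) - 2 * c * w i * w j + c * c * w i * w j * (\<Sum>x<N. (w x)^2)"
    unfolding pt using i j
    by (simp add: sum.distrib sum_subtractf sum_distrib_left[symmetric] if_distrib[of "\<lambda>a. a * _"] cong: if_cong)
  also have "\<dots> = 1\<^sub>m N $$ (i,j)" using c_w i j by auto
  finally show "(H * H) $$ (i,j) = 1\<^sub>m N $$ (i,j)" .
qed (auto simp: H_def)

text \<open>The reflection in the hyperplane orthogonal to \<open>u - e\<^sub>0\<close>, which swaps \<open>e\<^sub>0\<close> and a
  unit vector \<open>u\<close>. For \<open>u = e\<^sub>0\<close> the factor \<open>c\<close> is \<open>2 / 0 = 0\<close> and the result is the identity.\<close>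
definition householder :: "real vec \<Rightarrow> real mat" where
  "householder u = (let N = dim_vec u; w = (\<lambda>k. u $ k - (if k = 0 then 1 else 0));
     c = 2 / (\<Sum>k<N. (w k)^2) in mat N N (\<lambda>(i,j). (if i = j then 1 else 0) - c * w i * w j))"

lemma householder_reflection:
  assumes u: "u \<in> carrier_vec N" and unit: "(\<Sum>k<N. (u $ k)^2) = 1"
  shows "householder u \<in> carrier_mat N N" "transpose_mat (householder u) = householder u"
    "householder u * householder u = 1\<^sub>m N" "\<And>i. i < N \<Longrightarrow> householder u $$ (i,0) = u $ i"
proof -
  have N: "N > 0" using unit by (cases N) auto
  define w where "w = (\<lambda>k. u $ k - (if k = 0 then (1::real) else 0))"
  define c where "c = 2 / (\<Sum>k<N. (w k)^2)"
  have H: "householder u = mat N N (\<lambda>(i,j). (if i = j then 1 else 0) - c * w i * w j)"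
    using u unfolding householder_def w_def c_def Let_def by simp
  show "householder u \<in> carrier_mat N N" unfolding H by simp
  show "transpose_mat (householder u) = householder u" unfolding H by (rule eq_matI) auto
  have w_sq: "(\<Sum>k<N. (w k)^2) = 2 - 2 * u $ 0"
  proof -
    have "\<And>k. (w k)^2 = (u $ k)^2 + (if k = 0 then 1 - 2 * u $ k else 0)"
      by (auto simp: w_def power2_eq_square algebra_simps)
    hence "(\<Sum>k<N. (w k)^2) = (\<Sum>k<N. (u $ k)^2) + (\<Sum>k<N. (if k = 0 then 1 - 2 * u $ k else 0))"
      by (simp add: sum.distrib)
    also have "\<dots> = 2 - 2 * u $ 0" using N unit by simp
    finally show ?thesis .
  qed
  have c_w: "c * (\<Sum>k<N. (w k)^2) = 2 \<or> c = 0" unfolding c_def by auto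
  show "householder u * householder u = 1\<^sub>m N" unfolding H using c_w by (rule reflection_involution)
  fix i assume i: "i < N"
  show "householder u $$ (i,0) = u $ i"
  proof (cases "c = 0")
    case True
    hence "(\<Sum>k<N. (w k)^2) = 0" unfolding c_def by simp
    hence "\<forall>k<N. w k = 0" by (simp add: sum_nonneg_eq_0_iff)
    hence "w i = 0" "w 0 = 0" using i N by auto
    thus ?thesis using i N unfolding H w_def by (auto split: if_splits)
  next
    case False
    hence "u $ 0 \<noteq> 1" unfolding c_def w_sq by auto
    hence c: "c = 1 / (1 - u $ 0)" unfolding c_def w_sq by (simp add: field_simps)
    have "householder u $$ (i,0) = (if i = 0 then 1 else 0) - c * w i * (u $ 0 - 1)"
      using i N unfolding H w_def by simp
    also have "\<dots> = (if i = 0 then 1 else 0) + w i" using \<open>u $ 0 \<noteq> 1\<close> unfolding c by (simp add: field_simps)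
    finally show ?thesis unfolding w_def by auto
  qed
qed

definition scalar_dsum :: "'a::comm_ring_1 \<Rightarrow> 'a mat \<Rightarrow> 'a mat" where
  "scalar_dsum c B = mat (Suc (dim_row B)) (Suc (dim_col B))
     (\<lambda>(i,j). if i = 0 \<and> j = 0 then c else if i = 0 \<or> j = 0 then 0 else B $$ (i - 1, j - 1))"

lemma scalar_dsum_carrier [simp]: "B \<in> carrier_mat n k \<Longrightarrow> scalar_dsum c B \<in> carrier_mat (Suc n) (Suc k)"
  unfolding scalar_dsum_def by auto

lemma index_scalar_dsum:
  "B \<in> carrier_mat n k \<Longrightarrow> i < Suc n \<Longrightarrow> j < Suc k \<Longrightarrow>
   scalar_dsum c B $$ (i,j) = (if i = 0 \<and> j = 0 then c else if i = 0 \<or> j = 0 then 0 else B $$ (i - 1, j - 1))"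
  unfolding scalar_dsum_def by auto

lemma scalar_dsum_mult:
  assumes B: "B \<in> carrier_mat n k" and C: "C \<in> carrier_mat k l"
  shows "scalar_dsum a B * scalar_dsum b C = scalar_dsum (a * b) (B * C)"
proof (rule eq_matI)
  fix i j assume "i < dim_row (scalar_dsum (a * b) (B * C))" "j < dim_col (scalar_dsum (a * b) (B * C))"
  hence i: "i < Suc n" and j: "j < Suc l" using B C by (auto simp: scalar_dsum_def)
  have "(scalar_dsum a B * scalar_dsum b C) $$ (i,j)
      = (\<Sum>x<Suc k. scalar_dsum a B $$ (i,x) * scalar_dsum b C $$ (x,j))"
    by (rule index_mult_mat_sum[OF scalar_dsum_carrier[OF B] scalar_dsum_carrier[OF C] i j])
  also have "\<dots> = scalar_dsum a B $$ (i,0) * scalar_dsum b C $$ (0,j)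
      + (\<Sum>x<k. scalar_dsum a B $$ (i, Suc x) * scalar_dsum b C $$ (Suc x, j))"
    by (rule sum.lessThan_Suc_shift)
  also have "\<dots> = scalar_dsum (a * b) (B * C) $$ (i,j)"
  proof (cases "i = 0 \<or> j = 0")
    case True
    thus ?thesis using i j B C by (auto simp: index_scalar_dsum scalar_dsum_def)
  next
    case False
    then obtain i' j' where ij: "i = Suc i'" "j = Suc j'" by (metis not0_implies_Suc)
    have "(B * C) $$ (i',j') = (\<Sum>x<k. B $$ (i',x) * C $$ (x,j'))"
      by (rule index_mult_mat_sum[OF B C]) (use i j ij in auto)
    thus ?thesis using i j ij
      by (simp add: index_scalar_dsum[OF mult_carrier_mat[OF B C]] index_scalar_dsum[OF B] index_scalar_dsum[OF C])
  qed
  finally show "(scalar_dsum a B * scalar_dsum b C) $$ (i,j) = scalar_dsum (a * b) (B * C) $$ (i,j)" .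
qed (use B C in \<open>auto simp: scalar_dsum_def\<close>)

lemma transpose_scalar_dsum:
  "B \<in> carrier_mat n k \<Longrightarrow> transpose_mat (scalar_dsum c B) = scalar_dsum c (transpose_mat B)"
  by (rule eq_matI) (auto simp: index_scalar_dsum scalar_dsum_def)

lemma scalar_dsum_one: "scalar_dsum 1 (1\<^sub>m n) = 1\<^sub>m (Suc n)"
  by (rule eq_matI) (auto simp: scalar_dsum_def)

lemma diagonal_mat_scalar_dsum:
  "B \<in> carrier_mat n n \<Longrightarrow> diagonal_mat B \<Longrightarrow> diagonal_mat (scalar_dsum c B)"
  unfolding diagonal_mat_def by (auto simp: index_scalar_dsum scalar_dsum_def)

lemma symmetric_scalar_dsum_of_col_0:
  assumes S: "S \<in> carrier_mat (Suc n) (Suc n)" "transpose_mat S = S"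
    and col: "\<And>i. i < Suc n \<Longrightarrow> S $$ (i,0) = (if i = 0 then \<mu> else 0)"
  shows "S = scalar_dsum \<mu> (mat n n (\<lambda>(i,j). S $$ (Suc i, Suc j)))"
proof (rule eq_matI)
  fix i j assume "i < dim_row (scalar_dsum \<mu> (mat n n (\<lambda>(i,j). S $$ (Suc i, Suc j))))"
    "j < dim_col (scalar_dsum \<mu> (mat n n (\<lambda>(i,j). S $$ (Suc i, Suc j))))"
  hence i: "i < Suc n" and j: "j < Suc n" by (auto simp: scalar_dsum_def)
  show "S $$ (i,j) = scalar_dsum \<mu> (mat n n (\<lambda>(i,j). S $$ (Suc i, Suc j))) $$ (i,j)"
  proof (cases "i = 0 \<or> j = 0")
    case True
    thus ?thesis using i j col symmetric_mat_index[OF S i j] by (auto simp: scalar_dsum_def)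
  next
    case False
    then obtain i' j' where "i = Suc i'" "j = Suc j'" by (metis not0_implies_Suc)
    thus ?thesis using i j by (simp add: scalar_dsum_def)
  qed
qed (use S in \<open>auto simp: scalar_dsum_def\<close>)

lemma involution_conj_col_0:
  fixes H S :: "'a::field mat"
  assumes H: "H \<in> carrier_mat N N" "H * H = 1\<^sub>m N" "\<And>i. i < N \<Longrightarrow> H $$ (i,0) = u $ i"
    and S: "S \<in> carrier_mat N N" and u: "u \<in> carrier_vec N" and ev: "S *\<^sub>v u = \<mu> \<cdot>\<^sub>v u"
    and i: "i < N"
  shows "(H * S * H) $$ (i,0) = (if i = 0 then \<mu> else 0)"
proof -
  have N: "0 < N" using i by simp
  have HS: "H * S \<in> carrier_mat N N" using H S by auto
  have "(H * S * H) $$ (i,0) = (\<Sum>x<N. (H * S) $$ (i,x) * u $ x)"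
    by (subst index_mult_mat_sum[OF HS H(1) i N]) (use H(3) in auto)
  also have "\<dots> = ((H * S) *\<^sub>v u) $ i" by (rule index_mult_mat_vec_sum[symmetric, OF HS u i])
  also have "(H * S) *\<^sub>v u = \<mu> \<cdot>\<^sub>v (H *\<^sub>v u)" using H S u ev
    by (simp add: assoc_mult_mat_vec[of _ N N _ N] mult_mat_vec[OF H(1) u])
  also have "(\<mu> \<cdot>\<^sub>v (H *\<^sub>v u)) $ i = \<mu> * (\<Sum>x<N. H $$ (i,x) * H $$ (x,0))"
    using i H u by (simp add: index_mult_mat_vec_sum[OF H(1) u i])
  also have "(\<Sum>x<N. H $$ (i,x) * H $$ (x,0)) = (H * H) $$ (i,0)"
    by (rule index_mult_mat_sum[symmetric, OF H(1) H(1) i N])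
  finally show ?thesis using H(2) i N by simp
qed

lemma householder_deflation:
  fixes S :: "real mat"
  assumes S: "S \<in> carrier_mat (Suc n) (Suc n)" "transpose_mat S = S"
    and u: "u \<in> carrier_vec (Suc n)" "(\<Sum>k<Suc n. (u $ k)^2) = 1" and ev: "S *\<^sub>v u = \<mu> \<cdot>\<^sub>v u"
  obtains S' where "S' \<in> carrier_mat n n" "transpose_mat S' = S'"
    "householder u * S * householder u = scalar_dsum \<mu> S'"
proof -
  define H where "H = householder u"
  note H = householder_reflection[OF u, folded H_def]
  define S1 where "S1 = H * S * H"
  have S1: "S1 \<in> carrier_mat (Suc n) (Suc n)" unfolding S1_def using H S by auto
  have "transpose_mat S1 = transpose_mat H * transpose_mat (H * S)"
    unfolding S1_def using H(1) S(1) by (subst transpose_mult[of _ "Suc n" "Suc n"]) auto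
  also have "transpose_mat (H * S) = transpose_mat S * transpose_mat H"
    using H(1) S(1) by (subst transpose_mult[of _ "Suc n" "Suc n"]) auto
  finally have S1_sym: "transpose_mat S1 = S1" unfolding S1_def using H(1,2) S
    by (simp add: assoc_mult_mat[of _ "Suc n" "Suc n" _ "Suc n" _ "Suc n"])
  define S' where "S' = mat n n (\<lambda>(i,j). S1 $$ (Suc i, Suc j))"
  have "H * S * H = scalar_dsum \<mu> S'" unfolding S'_def
    using symmetric_scalar_dsum_of_col_0[OF S1 S1_sym] involution_conj_col_0[OF H(1,3,4) S(1) u(1) ev]
    unfolding S1_def by blast
  moreover have "transpose_mat S' = S'"
    unfolding S'_def by (rule eq_matI) (auto simp: symmetric_mat_index[OF S1 S1_sym])
  moreover have "S' \<in> carrier_mat n n" unfolding S'_def by simp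
  ultimately show thesis using that unfolding H_def by blast
qed

theorem real_symmetric_orthogonally_diagonalizable:
  fixes S :: "real mat"
  assumes "S \<in> carrier_mat n n" "transpose_mat S = S"
  shows "\<exists>V. V \<in> carrier_mat n n \<and> transpose_mat V * V = 1\<^sub>m n \<and> diagonal_mat (transpose_mat V * S * V)"
  using assms
proof (induction n arbitrary: S)
  case 0
  show ?case by (intro exI[of _ "1\<^sub>m 0"]) (auto simp: diagonal_mat_def)
next
  case (Suc n S)
  let ?N = "Suc n"
  obtain \<mu> u where u: "u \<in> carrier_vec ?N" "(\<Sum>k<?N. (u $ k)^2) = 1" and ev: "S *\<^sub>v u = \<mu> \<cdot>\<^sub>v u"
    using real_symmetric_unit_eigenvector[OF Suc.prems] by blast
  define H where "H = householder u"
  note H = householder_reflection[OF u, folded H_def]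
  obtain S' where S': "S' \<in> carrier_mat n n" "transpose_mat S' = S'" and HSH: "H * S * H = scalar_dsum \<mu> S'"
    using householder_deflation[OF Suc.prems u ev] unfolding H_def by blast
  obtain V' where V': "V' \<in> carrier_mat n n" "transpose_mat V' * V' = 1\<^sub>m n"
    "diagonal_mat (transpose_mat V' * S' * V')"
    using Suc.IH[OF S'] by blast
  define E where "E = scalar_dsum 1 V'"
  have E: "E \<in> carrier_mat ?N ?N" "transpose_mat E \<in> carrier_mat ?N ?N"
    "transpose_mat E = scalar_dsum 1 (transpose_mat V')"
    unfolding E_def using V' by (auto simp: transpose_scalar_dsum)
  define V where "V = H * E"
  have V: "V \<in> carrier_mat ?N ?N" unfolding V_def using H E by auto
  have Vt: "transpose_mat V = transpose_mat E * H" unfolding V_def using H E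
    by (simp add: transpose_mult[of _ ?N ?N])
  have "transpose_mat V * V = transpose_mat E * (H * H) * E" unfolding Vt unfolding V_def using H(1) E
    by (simp add: assoc_mult_mat[of _ ?N ?N _ ?N _ ?N])
  also have "\<dots> = transpose_mat E * E" using H(3) E by simp
  also have "\<dots> = 1\<^sub>m ?N" unfolding E(3) unfolding E_def using V'
    by (simp add: scalar_dsum_mult[of _ n n _ n] scalar_dsum_one)
  finally have orth: "transpose_mat V * V = 1\<^sub>m ?N" .
  have "transpose_mat V * S * V = transpose_mat E * (H * S * H) * E"
    unfolding Vt unfolding V_def using H(1) E Suc.prems(1) by (simp add: assoc_mult_mat[of _ ?N ?N _ ?N _ ?N])
  also have "\<dots> = scalar_dsum \<mu> (transpose_mat V' * S' * V')"
    unfolding HSH E(3) unfolding E_def using V' S' by (simp add: scalar_dsum_mult[of _ n n _ n])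
  finally have "diagonal_mat (transpose_mat V * S * V)"
    using diagonal_mat_scalar_dsum[of "transpose_mat V' * S' * V'" n] V'(1,3) S'(1) by auto
  then show ?case using V orth by blast
qed

section \<open>Nuclear norm and low-rank approximation\<close>

lemma proots_prod_linear_factors: "proots (\<Prod>a\<leftarrow>as. [:- a, 1:]) = mset (as :: 'a::idom list)"
proof (induction as)
  case (Cons a as)
  have "(\<Prod>a\<leftarrow>as. [:- a, 1:]) \<noteq> (0 :: 'a poly)" by (auto simp: prod_list_zero_iff)
  hence "proots (\<Prod>a\<leftarrow>a # as. [:- a, 1:]) = proots [:- a, 1:] + proots (\<Prod>a\<leftarrow>as. [:- a, 1:])"
    by (simp add: proots_mult del: mult_pCons_left)
  thus ?case using Cons by simp
qed simp

lemma nuclear_norm_orthogonal_diagonalization: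
  fixes X :: "real mat"
  assumes X: "X \<in> carrier_mat m n" and V: "V \<in> carrier_mat n n" "transpose_mat V * V = 1\<^sub>m n"
    and diag: "diagonal_mat (transpose_mat V * (transpose_mat X * X) * V)"
  shows "nuclear_norm X = (\<Sum>k<n. sqrt ((transpose_mat V * (transpose_mat X * X) * V) $$ (k,k)))"
proof -
  define M where "M = transpose_mat X * X"
  define D where "D = transpose_mat V * M * V"
  have M: "M \<in> carrier_mat n n" using X by (auto simp: M_def)
  have Vt: "transpose_mat V \<in> carrier_mat n n" using V by auto
  have VVt: "V * transpose_mat V = 1\<^sub>m n" by (rule mat_mult_left_right_inverse[OF Vt V(1) V(2)])
  have D: "D \<in> carrier_mat n n" using V M by (auto simp: D_def)
  have "V * D * transpose_mat V = (V * transpose_mat V) * M * (V * transpose_mat V)"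
    unfolding D_def using V Vt M by (simp add: assoc_mult_mat[of _ n n _ n _ n])
  hence "M = V * D * transpose_mat V" using VVt M by simp
  hence "similar_mat M D" unfolding similar_mat_def similar_mat_wit_def
    by (intro exI[of _ V] exI[of _ "transpose_mat V"]) (use M D V Vt VVt in \<open>auto simp: Let_def\<close>)
  moreover have "upper_triangular D"
    using D diag unfolding upper_triangular_def diagonal_mat_def D_def M_def by auto
  ultimately have "char_poly M = (\<Prod>a\<leftarrow>diag_mat D. [:- a, 1:])"
    using char_poly_similar char_poly_upper_triangular[OF D] by metis
  hence "nuclear_norm X = sum_list (map sqrt (diag_mat D))"
    unfolding nuclear_norm_def singular_values_def M_def[symmetric]
    by (simp add: proots_prod_linear_factors sum_mset_sum_list mset_map[symmetric] del: mset_map)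
  also have "\<dots> = (\<Sum>k<n. sqrt (D $$ (k,k)))" unfolding diag_mat_def using D
    by (simp add: interv_sum_list_conv_sum_set_nat atLeast0LessThan comp_def)
  finally show ?thesis unfolding D_def M_def .
qed

locale gram_eigenbasis =
  fixes x :: "nat \<Rightarrow> nat \<Rightarrow> real" and m n :: nat and v :: "nat \<Rightarrow> nat \<Rightarrow> real" and lam :: "nat \<Rightarrow> real"
  assumes orthonormal: "\<And>k l. k < n \<Longrightarrow> l < n \<Longrightarrow> (\<Sum>j<n. v k j * v l j) = (if k = l then 1 else 0)"
    and complete: "\<And>j j'. j < n \<Longrightarrow> j' < n \<Longrightarrow> (\<Sum>k<n. v k j * v k j') = (if j = j' then 1 else 0)"
    and eigen: "\<And>k j. k < n \<Longrightarrow> j < n \<Longrightarrow> (\<Sum>j'<n. (\<Sum>i<m. x i j * x i j') * v k j') = lam k * v k j"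

lemma gram_eigenbasis_of_diagonalization:
  fixes X :: "real mat"
  assumes X: "X \<in> carrier_mat m n" and V: "V \<in> carrier_mat n n" "transpose_mat V * V = 1\<^sub>m n"
    and diag: "diagonal_mat (transpose_mat V * (transpose_mat X * X) * V)"
  shows "gram_eigenbasis (\<lambda>i j. X $$ (i,j)) m n (\<lambda>k j. V $$ (j,k))
    (\<lambda>k. (transpose_mat V * (transpose_mat X * X) * V) $$ (k,k))"
proof -
  define M where "M = transpose_mat X * X"
  define D where "D = transpose_mat V * M * V"
  have Xt: "transpose_mat X \<in> carrier_mat n m" using X by auto
  have M: "M \<in> carrier_mat n n" unfolding M_def using X by auto
  have Vt: "transpose_mat V \<in> carrier_mat n n" using V by auto
  have VVt: "V * transpose_mat V = 1\<^sub>m n" by (rule mat_mult_left_right_inverse[OF Vt V(1) V(2)])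
  have D: "D \<in> carrier_mat n n" using V M by (auto simp: D_def)
  have "V * D = (V * transpose_mat V) * (M * V)"
    unfolding D_def using V Vt M by (simp add: assoc_mult_mat[of _ n n _ n _ n])
  hence MV: "M * V = V * D" using VVt M V by simp
  show ?thesis unfolding M_def[symmetric] D_def[symmetric]
  proof
    fix k l assume "k < n" "l < n"
    thus "(\<Sum>j<n. V $$ (j,k) * V $$ (j,l)) = (if k = l then 1 else 0)"
      using arg_cong[OF V(2), of "\<lambda>A. A $$ (k,l)"] index_mult_mat_sum[OF Vt V(1), of k l] V by auto
  next
    fix j j' assume "j < n" "j' < n"
    thus "(\<Sum>k<n. V $$ (j,k) * V $$ (j',k)) = (if j = j' then 1 else 0)"
      using arg_cong[OF VVt, of "\<lambda>A. A $$ (j,j')"] index_mult_mat_sum[OF V(1) Vt, of j j'] V by auto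
  next
    fix k j assume k: "k < n" and j: "j < n"
    have M_ij: "M $$ (j,j') = (\<Sum>i<m. X $$ (i,j) * X $$ (i,j'))" if "j' < n" for j'
      unfolding M_def index_mult_mat_sum[OF Xt X j that] using X j by (intro sum.cong) auto
    have "(\<Sum>j'<n. (\<Sum>i<m. X $$ (i,j) * X $$ (i,j')) * V $$ (j',k)) = (M * V) $$ (j,k)"
      unfolding index_mult_mat_sum[OF M V(1) j k] by (intro sum.cong) (auto simp: M_ij)
    also have "\<dots> = (\<Sum>x<n. V $$ (j,x) * D $$ (x,k))" unfolding MV by (rule index_mult_mat_sum[OF V(1) D j k])
    also have "\<dots> = (\<Sum>x<n. if x = k then V $$ (j,x) * D $$ (x,k) else 0)"
      using diag D k unfolding D_def M_def diagonal_mat_def by (intro sum.cong) auto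
    finally show "(\<Sum>j'<n. (\<Sum>i<m. X $$ (i,j) * X $$ (i,j')) * V $$ (j',k)) = D $$ (k,k) * V $$ (j,k)"
      using k by simp
  qed
qed

lemma gram_eigenbasis_exists:
  fixes X :: "real mat"
  assumes X: "X \<in> carrier_mat m n"
  obtains v lam where "gram_eigenbasis (\<lambda>i j. X $$ (i,j)) m n v lam" "nuclear_norm X = (\<Sum>k<n. sqrt (lam k))"
proof -
  have "transpose_mat X * X \<in> carrier_mat n n" "transpose_mat (transpose_mat X * X) = transpose_mat X * X"
    using X by (auto simp: transpose_mult[of _ n m])
  then obtain V where V: "V \<in> carrier_mat n n" "transpose_mat V * V = 1\<^sub>m n"
    and diag: "diagonal_mat (transpose_mat V * (transpose_mat X * X) * V)"
    using real_symmetric_orthogonally_diagonalizable by blast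
  show thesis
    by (rule that[OF gram_eigenbasis_of_diagonalization[OF X V diag]
          nuclear_norm_orthogonal_diagonalization[OF X V diag]])
qed

lemma Cauchy_Schwarz_sum:
  fixes f g :: "'a \<Rightarrow> real"
  shows "(\<Sum>i\<in>A. f i * g i)^2 \<le> (\<Sum>i\<in>A. (f i)^2) * (\<Sum>i\<in>A. (g i)^2)"
proof -
  let ?F = "\<Sum>i\<in>A. (f i)^2" and ?G = "\<Sum>i\<in>A. (g i)^2" and ?P = "\<Sum>i\<in>A. f i * g i"
  have pt: "\<And>i j. (f i * g j - f j * g i)^2
      = (f i)^2 * (g j)^2 + (f j)^2 * (g i)^2 - 2 * ((f i * g i) * (f j * g j))"
    by (simp add: power2_eq_square algebra_simps)
  have s1: "(\<Sum>i\<in>A. \<Sum>j\<in>A. (f i)^2 * (g j)^2) = ?F * ?G" by (simp add: sum_product)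
  have s2: "(\<Sum>i\<in>A. \<Sum>j\<in>A. (f j)^2 * (g i)^2) = ?F * ?G"
    unfolding sum_product by (subst sum.swap) (simp add: mult.commute)
  have s3: "(\<Sum>i\<in>A. \<Sum>j\<in>A. (f i * g i) * (f j * g j)) = ?P * ?P" by (simp add: sum_product)
  have "0 \<le> (\<Sum>i\<in>A. \<Sum>j\<in>A. (f i * g j - f j * g i)^2)" by (intro sum_nonneg) auto
  also have "\<dots> = (\<Sum>i\<in>A. \<Sum>j\<in>A. (f i)^2 * (g j)^2) + (\<Sum>i\<in>A. \<Sum>j\<in>A. (f j)^2 * (g i)^2)
      - 2 * (\<Sum>i\<in>A. \<Sum>j\<in>A. (f i * g i) * (f j * g j))"
    unfolding pt by (simp only: sum.distrib sum_subtractf sum_distrib_left)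
  also have "\<dots> = 2 * (?F * ?G) - 2 * ?P^2" unfolding s1 s2 s3 by (simp add: power2_eq_square)
  finally show ?thesis by simp
qed

lemma card_threshold_le_sum_sqrt:
  fixes f :: "'a \<Rightarrow> real"
  assumes "finite I" "\<And>k. k \<in> I \<Longrightarrow> f k \<ge> 0"
  shows "real (card {k\<in>I. \<theta> \<le> f k}) * sqrt \<theta> \<le> (\<Sum>k\<in>I. sqrt (f k))"
proof -
  have "real (card {k\<in>I. \<theta> \<le> f k}) * sqrt \<theta> = (\<Sum>k\<in>{k\<in>I. \<theta> \<le> f k}. sqrt \<theta>)" by simp
  also have "\<dots> \<le> (\<Sum>k\<in>{k\<in>I. \<theta> \<le> f k}. sqrt (f k))" by (rule sum_mono) auto
  also have "\<dots> \<le> (\<Sum>k\<in>I. sqrt (f k))" by (rule sum_mono2) (use assms in auto)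
  finally show ?thesis .
qed

lemma sum_below_threshold_le:
  fixes f :: "'a \<Rightarrow> real"
  assumes "finite I" "\<And>k. k \<in> I \<Longrightarrow> f k \<ge> 0" "\<theta> \<ge> 0"
  shows "(\<Sum>k\<in>{k\<in>I. f k < \<theta>}. f k) \<le> sqrt \<theta> * (\<Sum>k\<in>I. sqrt (f k))"
proof -
  have "(\<Sum>k\<in>{k\<in>I. f k < \<theta>}. f k) \<le> (\<Sum>k\<in>{k\<in>I. f k < \<theta>}. sqrt \<theta> * sqrt (f k))"
  proof (rule sum_mono)
    fix k assume "k \<in> {k\<in>I. f k < \<theta>}"
    hence "f k < \<theta>" "f k \<ge> 0" using assms(2) by auto
    hence "sqrt (f k) * sqrt (f k) \<le> sqrt \<theta> * sqrt (f k)" by (intro mult_right_mono) auto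
    thus "f k \<le> sqrt \<theta> * sqrt (f k)" using \<open>f k \<ge> 0\<close> by simp
  qed
  also have "\<dots> \<le> sqrt \<theta> * (\<Sum>k\<in>I. sqrt (f k))"
    unfolding sum_distrib_left[symmetric] by (intro mult_left_mono sum_mono2) (use assms in auto)
  finally show ?thesis .
qed

context gram_eigenbasis
begin

definition coef :: "nat \<Rightarrow> nat \<Rightarrow> real" where "coef k i = (\<Sum>j<n. x i j * v k j)"

lemma coef_orthogonal:
  assumes k: "k < n" and l: "l < n"
  shows "(\<Sum>i<m. coef k i * coef l i) = (if k = l then lam k else 0)"
proof -
  have "(\<Sum>i<m. coef k i * coef l i) = (\<Sum>i<m. \<Sum>j<n. \<Sum>j'<n. x i j * v k j * (x i j' * v l j'))"
    unfolding coef_def by (simp add: sum_product)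
  also have "\<dots> = (\<Sum>j<n. \<Sum>i<m. \<Sum>j'<n. x i j * v k j * (x i j' * v l j'))" by (rule sum.swap)
  also have "\<dots> = (\<Sum>j<n. \<Sum>j'<n. \<Sum>i<m. x i j * v k j * (x i j' * v l j'))"
    by (rule sum.cong[OF refl], rule sum.swap)
  also have "\<dots> = (\<Sum>j<n. v k j * (\<Sum>j'<n. (\<Sum>i<m. x i j * x i j') * v l j'))"
    by (simp add: sum_distrib_left sum_distrib_right mult_ac)
  also have "\<dots> = lam l * (\<Sum>j<n. v k j * v l j)"
    using eigen[OF l] by (simp add: sum_distrib_left mult_ac)
  also have "\<dots> = (if k = l then lam k else 0)" using orthonormal[OF k l] by auto
  finally show ?thesis .
qed

lemma eigenvalue_nonneg: "k < n \<Longrightarrow> lam k \<ge> 0"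
  using coef_orthogonal[of k k] by (metis (no_types, lifting) sum_nonneg zero_le_square)

lemma coef_expansion: "j < n \<Longrightarrow> (\<Sum>k<n. coef k i * v k j) = x i j"
proof -
  assume j: "j < n"
  have "(\<Sum>k<n. coef k i * v k j) = (\<Sum>k<n. \<Sum>j'<n. x i j' * (v k j' * v k j))"
    unfolding coef_def by (simp add: sum_distrib_left sum_distrib_right mult_ac)
  also have "\<dots> = (\<Sum>j'<n. x i j' * (\<Sum>k<n. v k j' * v k j))"
    by (subst sum.swap) (simp add: sum_distrib_left)
  also have "\<dots> = (\<Sum>j'<n. if j' = j then x i j' else 0)"
    by (intro sum.cong refl) (use complete j in auto)
  finally show ?thesis using j by simp
qed

lemma gram_coef:
  assumes "k < n" "j < n"
  shows "(\<Sum>i<m. x i j * coef k i) = lam k * v k j"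
proof -
  have "(\<Sum>i<m. x i j * coef k i) = (\<Sum>i<m. \<Sum>j'<n. x i j * x i j' * v k j')"
    unfolding coef_def by (simp add: sum_distrib_left mult_ac)
  also have "\<dots> = (\<Sum>j'<n. (\<Sum>i<m. x i j * x i j') * v k j')"
    by (subst sum.swap) (simp add: sum_distrib_right)
  finally show ?thesis using eigen[OF assms] by simp
qed

lemma parseval:
  assumes "L \<subseteq> {..<n}"
  shows "(\<Sum>j<n. (\<Sum>k\<in>L. c k * v k j)^2) = (\<Sum>k\<in>L. (c k)^2)"
proof -
  have "(\<Sum>j<n. (\<Sum>k\<in>L. c k * v k j)^2) = (\<Sum>j<n. \<Sum>k\<in>L. \<Sum>l\<in>L. c k * c l * (v k j * v l j))"
    by (simp add: power2_eq_square sum_product mult_ac)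
  also have "\<dots> = (\<Sum>k\<in>L. \<Sum>j<n. \<Sum>l\<in>L. c k * c l * (v k j * v l j))" by (rule sum.swap)
  also have "\<dots> = (\<Sum>k\<in>L. \<Sum>l\<in>L. c k * c l * (\<Sum>j<n. v k j * v l j))"
    by (rule sum.cong[OF refl], subst sum.swap) (simp add: sum_distrib_left)
  also have "\<dots> = (\<Sum>k\<in>L. \<Sum>l\<in>L. if l = k then (c k)^2 else 0)"
    using assms orthonormal by (intro sum.cong refl) (auto simp: power2_eq_square subset_eq)
  also have "\<dots> = (\<Sum>k\<in>L. (c k)^2)"
    using assms by (simp add: finite_subset[OF assms])
  finally show ?thesis .
qed

lemma truncation_error:
  assumes K: "K \<subseteq> {..<n}"
  shows "(\<Sum>i<m. \<Sum>j<n. (x i j - (\<Sum>k\<in>K. coef k i * v k j))^2) = (\<Sum>k\<in>{..<n} - K. lam k)"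
proof -
  have tail: "x i j - (\<Sum>k\<in>K. coef k i * v k j) = (\<Sum>k\<in>{..<n} - K. coef k i * v k j)"
    if "j < n" for i j
    using coef_expansion[OF that, of i] sum.subset_diff[OF K, of "\<lambda>k. coef k i * v k j"] by simp
  have "(\<Sum>i<m. \<Sum>j<n. (x i j - (\<Sum>k\<in>K. coef k i * v k j))^2)
      = (\<Sum>i<m. \<Sum>j<n. (\<Sum>k\<in>{..<n} - K. coef k i * v k j)^2)"
    by (intro sum.cong refl) (simp add: tail)
  also have "\<dots> = (\<Sum>i<m. \<Sum>k\<in>{..<n} - K. (coef k i)^2)"
    by (simp add: parseval[OF Diff_subset])
  also have "\<dots> = (\<Sum>k\<in>{..<n} - K. lam k)"
    by (subst sum.swap) (intro sum.cong refl, simp add: coef_orthogonal power2_eq_square)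
  finally show ?thesis .
qed

lemma coef_sq_le:
  assumes x: "\<And>j. j < n \<Longrightarrow> \<bar>x i j\<bar> \<le> 1" and k: "k < n"
  shows "(coef k i)^2 \<le> real n"
proof -
  have "(coef k i)^2 \<le> (\<Sum>j<n. (x i j)^2) * (\<Sum>j<n. (v k j)^2)"
    unfolding coef_def by (rule Cauchy_Schwarz_sum)
  also have "(\<Sum>j<n. (v k j)^2) = 1" using orthonormal[OF k k] by (simp add: power2_eq_square)
  also have "(\<Sum>j<n. (x i j)^2) \<le> (\<Sum>j<n. 1)" by (intro sum_mono) (simp add: x abs_square_le_1)
  finally show ?thesis by simp
qed

lemma eigenvalue_eigenvector_sq_le:
  assumes x: "\<And>i. i < m \<Longrightarrow> \<bar>x i j\<bar> \<le> 1" and k: "k < n" and j: "j < n"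
  shows "lam k * (v k j)^2 \<le> real m"
proof -
  have "(lam k * v k j)^2 \<le> (\<Sum>i<m. (x i j)^2) * (\<Sum>i<m. (coef k i)^2)"
    unfolding gram_coef[OF k j, symmetric] by (rule Cauchy_Schwarz_sum)
  also have "(\<Sum>i<m. (coef k i)^2) = lam k" using coef_orthogonal[OF k k] by (simp add: power2_eq_square)
  finally have cs: "(lam k * v k j)^2 \<le> (\<Sum>i<m. (x i j)^2) * lam k" .
  have "(\<Sum>i<m. (x i j)^2) \<le> (\<Sum>i<m. 1)" by (intro sum_mono) (simp add: x abs_square_le_1)
  hence "(lam k * v k j)^2 \<le> real m * lam k"
    using cs eigenvalue_nonneg[OF k] by (simp add: mult_right_mono order_trans)
  hence "lam k * (lam k * (v k j)^2) \<le> lam k * real m" by (simp add: power2_eq_square mult_ac)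
  moreover have "lam k \<ge> 0" using eigenvalue_nonneg[OF k] .
  ultimately show ?thesis by (cases "lam k = 0") auto
qed

lemma scaled_coef_le:
  assumes x: "\<And>j. j < n \<Longrightarrow> \<bar>x i j\<bar> \<le> 1" and k: "k < n"
  shows "\<bar>coef k i / sqrt (real n)\<bar> \<le> 1"
proof -
  have "(coef k i)^2 \<le> real n" by (rule coef_sq_le[OF x k])
  hence "\<bar>coef k i\<bar> \<le> sqrt (real n)" by (metis real_sqrt_abs real_sqrt_le_mono)
  moreover have "n > 0" using k by simp
  ultimately show ?thesis by (simp add: abs_divide)
qed

lemma scaled_eigenvector_le:
  assumes x: "\<And>i. i < m \<Longrightarrow> \<bar>x i j\<bar> \<le> 1" and k: "k < n" and j: "j < n" and m: "m > 0" and t: "t > 0"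
    and large: "t^2 * (real m * real n) \<le> lam k"
  shows "\<bar>sqrt (real n) * v k j\<bar> \<le> 1 / t"
proof -
  have "t^2 * (real m * real n) * (v k j)^2 \<le> real m"
    using eigenvalue_eigenvector_sq_le[OF x k j] large by (meson mult_right_mono order_trans zero_le_power2)
  hence "real m * (t * (sqrt (real n) * v k j))^2 \<le> real m * 1" by (simp add: power_mult_distrib mult_ac)
  hence "(t * (sqrt (real n) * v k j))^2 \<le> 1" using m by simp
  hence "t * \<bar>sqrt (real n) * v k j\<bar> \<le> 1" using t by (simp add: abs_square_le_1 abs_mult)
  thus ?thesis using t by (simp add: field_simps)
qed

lemma low_rank_approx:
  assumes x: "\<And>i j. i < m \<Longrightarrow> j < n \<Longrightarrow> \<bar>x i j\<bar> \<le> 1" and m: "m > 0" and n: "n > 0"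
    and nuc: "(\<Sum>k<n. sqrt (lam k)) \<le> q * sqrt (real m * real n)" and t: "t > 0"
  shows "\<exists>K \<alpha> \<beta>. K \<subseteq> {..<n} \<and> real (card K) \<le> q / t \<and> (\<forall>i<m. \<forall>k\<in>K. \<bar>\<alpha> i k\<bar> \<le> 1) \<and>
     (\<forall>j<n. \<forall>k\<in>K. \<bar>\<beta> j k\<bar> \<le> 1 / t) \<and>
     (\<Sum>i<m. \<Sum>j<n. (x i j - (\<Sum>k\<in>K. \<alpha> i k * \<beta> j k))^2) \<le> t * q * (real m * real n)"
proof -
  define \<theta> where "\<theta> = t^2 * (real m * real n)"
  have \<theta>: "\<theta> > 0" unfolding \<theta>_def using t m n by simp
  have sqrt_\<theta>: "sqrt \<theta> = t * sqrt (real m * real n)" unfolding \<theta>_def using t by (simp add: real_sqrt_mult)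
  have mn: "sqrt (real m * real n) > 0" using m n by simp
  define K where "K = {k\<in>{..<n}. \<theta> \<le> lam k}"
  have K: "K \<subseteq> {..<n}" unfolding K_def by auto
  have "{..<n} - K = {k\<in>{..<n}. lam k < \<theta>}" unfolding K_def by auto
  hence "(\<Sum>k\<in>{..<n} - K. lam k) \<le> sqrt \<theta> * (\<Sum>k<n. sqrt (lam k))"
    using sum_below_threshold_le[of "{..<n}" lam \<theta>] eigenvalue_nonneg \<theta> by simp
  also have "\<dots> \<le> sqrt \<theta> * (q * sqrt (real m * real n))" by (rule mult_left_mono[OF nuc]) (use \<theta> in simp)
  also have "\<dots> = t * q * (real m * real n)" by (simp add: sqrt_\<theta> mult_ac)
  finally have err: "(\<Sum>i<m. \<Sum>j<n. (x i j - (\<Sum>k\<in>K. coef k i * v k j))^2) \<le> t * q * (real m * real n)"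
    unfolding truncation_error[OF K] .
  have "real (card K) * (t * sqrt (real m * real n)) \<le> q * sqrt (real m * real n)"
    using card_threshold_le_sum_sqrt[of "{..<n}" lam \<theta>] eigenvalue_nonneg nuc
    unfolding K_def sqrt_\<theta>[symmetric] by force
  hence card: "real (card K) \<le> q / t" using t mn by (simp add: field_simps)
  define \<alpha> where "\<alpha> i k = coef k i / sqrt (real n)" for i k
  define \<beta> where "\<beta> j k = sqrt (real n) * v k j" for j k
  have "\<alpha> i k * \<beta> j k = coef k i * v k j" for i j k unfolding \<alpha>_def \<beta>_def using n by simp
  hence "(\<Sum>i<m. \<Sum>j<n. (x i j - (\<Sum>k\<in>K. \<alpha> i k * \<beta> j k))^2) \<le> t * q * (real m * real n)"
    using err by simp
  moreover have "\<bar>\<alpha> i k\<bar> \<le> 1" if "i < m" "k \<in> K" for i k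
    unfolding \<alpha>_def using scaled_coef_le[of i k] x that n by (simp add: K_def)
  moreover have "\<bar>\<beta> j k\<bar> \<le> 1 / t" if "j < n" "k \<in> K" for j k
    unfolding \<beta>_def using scaled_eigenvector_le[of j k] x that m t by (simp add: K_def \<theta>_def)
  ultimately show ?thesis using card K by blast
qed

end

lemma low_rank_approx:
  fixes X :: "real mat"
  assumes X: "X \<in> carrier_mat m n" and m: "m > 0" and n: "n > 0"
    and x: "\<And>i j. i < m \<Longrightarrow> j < n \<Longrightarrow> \<bar>X $$ (i,j)\<bar> \<le> 1"
    and nuc: "nuclear_norm X \<le> q * sqrt (real m * real n)" and t: "t > 0"
  shows "\<exists>K \<alpha> \<beta>. K \<subseteq> {..<n} \<and> real (card K) \<le> q / t \<and> (\<forall>i<m. \<forall>k\<in>K. \<bar>\<alpha> i k\<bar> \<le> 1) \<and>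
     (\<forall>j<n. \<forall>k\<in>K. \<bar>\<beta> j k\<bar> \<le> 1 / t) \<and>
     (\<Sum>i<m. \<Sum>j<n. (X $$ (i,j) - (\<Sum>k\<in>K. \<alpha> i k * \<beta> j k))^2) \<le> t * q * (real m * real n)"
proof -
  obtain v lam where "gram_eigenbasis (\<lambda>i j. X $$ (i,j)) m n v lam" "nuclear_norm X = (\<Sum>k<n. sqrt (lam k))"
    using gram_eigenbasis_exists[OF X] .
  thus ?thesis using gram_eigenbasis.low_rank_approx[OF _ x m n _ t] nuc by simp
qed

section \<open>Quantized approximation\<close>

lemma floor_divide_bounds:
  fixes h y :: real
  assumes h: "h > 0"
  shows "h * of_int \<lfloor>y / h\<rfloor> \<le> y" "y < h * of_int \<lfloor>y / h\<rfloor> + h"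
proof -
  have "of_int \<lfloor>y / h\<rfloor> \<le> y / h" by (rule of_int_floor_le)
  thus "h * of_int \<lfloor>y / h\<rfloor> \<le> y" using h by (simp add: le_divide_eq mult.commute)
  have "y / h < of_int \<lfloor>y / h\<rfloor> + 1" by (rule real_of_int_floor_add_one_gt)
  thus "y < h * of_int \<lfloor>y / h\<rfloor> + h" using h by (simp add: divide_less_eq algebra_simps)
qed

lemma floor_divide_in_range:
  fixes y Y h :: real
  assumes "\<bar>y\<bar> \<le> Y" "h > 0"
  shows "\<lfloor>y / h\<rfloor> \<in> {- \<lceil>Y / h\<rceil> .. \<lceil>Y / h\<rceil>}"
proof -
  have "y \<le> Y" "- Y \<le> y" using assms(1) by auto
  hence "y / h \<le> Y / h" "- (Y / h) \<le> y / h"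
    using divide_right_mono[of y Y h] divide_right_mono[of "- Y" y h] assms(2) by auto
  hence "\<lfloor>y / h\<rfloor> \<le> \<lceil>Y / h\<rceil>" "\<lfloor>- (Y / h)\<rfloor> \<le> \<lfloor>y / h\<rfloor>"
    by (meson floor_le_ceiling floor_mono order_trans)+
  thus ?thesis by (simp add: floor_minus)
qed

lemma rounded_product_error:
  fixes a b h1 h2 B :: real
  assumes a: "\<bar>a\<bar> \<le> 1" and b: "\<bar>b\<bar> \<le> B" and h1: "h1 > 0" "h1 \<le> 1" and h2: "h2 > 0"
  shows "\<bar>a * b - (h1 * of_int \<lfloor>a / h1\<rfloor>) * (h2 * of_int \<lfloor>b / h2\<rfloor>)\<bar> \<le> h1 * B + 2 * h2"
proof -
  define a' where "a' = h1 * of_int \<lfloor>a / h1\<rfloor>"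
  define b' where "b' = h2 * of_int \<lfloor>b / h2\<rfloor>"
  have da: "\<bar>a - a'\<bar> \<le> h1" using floor_divide_bounds[OF h1(1), of a] unfolding a'_def by auto
  have db: "\<bar>b - b'\<bar> \<le> h2" using floor_divide_bounds[OF h2, of b] unfolding b'_def by auto
  have a': "\<bar>a'\<bar> \<le> 2" using da a h1 by linarith
  have "a * b - a' * b' = (a - a') * b + a' * (b - b')" by (simp add: algebra_simps)
  hence "\<bar>a * b - a' * b'\<bar> \<le> \<bar>a - a'\<bar> * \<bar>b\<bar> + \<bar>a'\<bar> * \<bar>b - b'\<bar>"
    by (simp add: abs_mult[symmetric] abs_triangle_ineq)
  also have "\<dots> \<le> h1 * B + 2 * h2"
    by (intro add_mono mult_mono) (use da db a' b h1 h2 in auto)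
  finally show ?thesis unfolding a'_def b'_def .
qed

lemma rounded_sum_product_error:
  fixes \<alpha> \<beta> :: "nat \<Rightarrow> real" and h1 h2 B :: real
  assumes "\<And>k. k \<in> K \<Longrightarrow> \<bar>\<alpha> k\<bar> \<le> 1" "\<And>k. k \<in> K \<Longrightarrow> \<bar>\<beta> k\<bar> \<le> B"
    and "h1 > 0" "h1 \<le> 1" "h2 > 0"
  shows "\<bar>(\<Sum>k\<in>K. \<alpha> k * \<beta> k) - (\<Sum>k\<in>K. (h1 * of_int \<lfloor>\<alpha> k / h1\<rfloor>) * (h2 * of_int \<lfloor>\<beta> k / h2\<rfloor>))\<bar>
     \<le> real (card K) * (h1 * B + 2 * h2)"
proof -
  have "\<bar>(\<Sum>k\<in>K. \<alpha> k * \<beta> k) - (\<Sum>k\<in>K. (h1 * of_int \<lfloor>\<alpha> k / h1\<rfloor>) * (h2 * of_int \<lfloor>\<beta> k / h2\<rfloor>))\<bar>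
     \<le> (\<Sum>k\<in>K. \<bar>\<alpha> k * \<beta> k - (h1 * of_int \<lfloor>\<alpha> k / h1\<rfloor>) * (h2 * of_int \<lfloor>\<beta> k / h2\<rfloor>)\<bar>)"
    unfolding sum_subtractf[symmetric] by (rule sum_abs)
  also have "\<dots> \<le> (\<Sum>k\<in>K. h1 * B + 2 * h2)"
    by (intro sum_mono rounded_product_error) (use assms in auto)
  finally show ?thesis by simp
qed

definition clip :: "real \<Rightarrow> real" where "clip y = max (-1) (min 1 y)"

lemma abs_clip_le_1: "\<bar>clip y\<bar> \<le> 1"
  unfolding clip_def by auto

lemma clip_closer: "\<bar>x\<bar> \<le> 1 \<Longrightarrow> \<bar>x - clip y\<bar> \<le> \<bar>x - y\<bar>"
  unfolding clip_def by auto

lemma permutes_lessThan: "\<pi> permutes {..<m} \<Longrightarrow> i < m \<Longrightarrow> \<pi> i < m"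
  using permutes_in_image by fastforce

lemma abs_le_max_norm:
  assumes "A \<in> carrier_mat m n" "i < m" "j < n"
  shows "\<bar>A $$ (i,j)\<bar> \<le> max_norm A"
proof -
  have "{\<bar>A $$ (i,j)\<bar> | i j. i < dim_row A \<and> j < dim_col A}
      = (\<lambda>(i,j). \<bar>A $$ (i,j)\<bar>) ` ({..<dim_row A} \<times> {..<dim_col A})" by auto
  thus ?thesis unfolding max_norm_def by (simp, intro Max_ge) (use assms in force)+
qed

lemma max_norm_le:
  assumes "A \<in> carrier_mat m n" "m > 0" "n > 0" "\<And>i j. i < m \<Longrightarrow> j < n \<Longrightarrow> \<bar>A $$ (i,j)\<bar> \<le> c"
  shows "max_norm A \<le> c"
proof -
  have "{\<bar>A $$ (i,j)\<bar> | i j. i < dim_row A \<and> j < dim_col A}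
      = (\<lambda>(i,j). \<bar>A $$ (i,j)\<bar>) ` ({..<dim_row A} \<times> {..<dim_col A})" by auto
  thus ?thesis unfolding max_norm_def by (simp, subst Max_le_iff) (use assms in auto)
qed

lemma max_norm_perm_mat_le:
  assumes "A \<in> carrier_mat m n" "m > 0" "n > 0" "\<pi> permutes {..<m}" "\<tau> permutes {..<n}"
  shows "max_norm (perm_mat A \<pi> \<tau>) \<le> max_norm A"
  by (rule max_norm_le[of _ m n]) (use assms in \<open>auto simp: perm_mat_def permutes_lessThan abs_le_max_norm\<close>)

lemma nfrob_norm_le:
  assumes "A \<in> carrier_mat m n" "m > 0" "n > 0" "\<epsilon> \<ge> 0"
    and "(\<Sum>i<m. \<Sum>j<n. (A $$ (i,j))^2) \<le> \<epsilon>^2 * (real m * real n)"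
  shows "nfrob_norm A \<le> \<epsilon>"
proof -
  have "(\<Sum>i<m. \<Sum>j<n. (A $$ (i,j))^2) / (real m * real n) \<le> \<epsilon>^2"
    using assms by (simp add: divide_le_eq)
  hence "sqrt ((\<Sum>i<m. \<Sum>j<n. (A $$ (i,j))^2) / (real m * real n)) \<le> sqrt (\<epsilon>^2)"
    by (rule real_sqrt_le_mono)
  thus ?thesis unfolding nfrob_norm_def using assms(1,4) by simp
qed

lemma nfrob_norm_perm_mat:
  assumes \<pi>: "\<pi> permutes {..<dim_row A}" and \<tau>: "\<tau> permutes {..<dim_col A}"
  shows "nfrob_norm (perm_mat A \<pi> \<tau>) = nfrob_norm A"
proof -
  have "(\<Sum>i<dim_row A. \<Sum>j<dim_col A. (perm_mat A \<pi> \<tau> $$ (i,j))^2)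
      = (\<Sum>i<dim_row A. \<Sum>j<dim_col A. (A $$ (\<pi> i, \<tau> j))^2)"
    by (simp add: perm_mat_def)
  also have "\<dots> = (\<Sum>i<dim_row A. \<Sum>j<dim_col A. (A $$ (\<pi> i, j))^2)"
    by (rule sum.cong[OF refl], subst sum.permute[OF \<tau>]) (simp add: comp_def)
  also have "\<dots> = (\<Sum>i<dim_row A. \<Sum>j<dim_col A. (A $$ (i,j))^2)"
    by (subst sum.permute[OF \<pi>]) (simp add: comp_def)
  finally show ?thesis unfolding nfrob_norm_def by (simp add: perm_mat_def)
qed

lemma nfrob_norm_perm_mat_minus:
  assumes "A \<in> carrier_mat m n" "B \<in> carrier_mat m n" "\<pi> permutes {..<m}" "\<tau> permutes {..<n}"
  shows "nfrob_norm (perm_mat A \<pi> \<tau> - perm_mat B \<pi> \<tau>) = nfrob_norm (A - B)"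
proof -
  have "perm_mat A \<pi> \<tau> - perm_mat B \<pi> \<tau> = perm_mat (A - B) \<pi> \<tau>"
    by (rule eq_matI) (use assms in \<open>auto simp: perm_mat_def permutes_lessThan\<close>)
  thus ?thesis using nfrob_norm_perm_mat[of \<pi> "A - B" \<tau>] assms by simp
qed

definition determined_by_codes :: "real mat \<Rightarrow> (nat \<Rightarrow> 'r) \<Rightarrow> (nat \<Rightarrow> 'c) \<Rightarrow> bool" where
  "determined_by_codes A R C \<longleftrightarrow> (\<forall>i i' j j'. i < dim_row A \<longrightarrow> i' < dim_row A \<longrightarrow>
     j < dim_col A \<longrightarrow> j' < dim_col A \<longrightarrow> R i = R i' \<longrightarrow> C j = C j' \<longrightarrow> A $$ (i,j) = A $$ (i',j'))"

lemma sum_sq_le_of_pointwise_bound: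
  fixes d e :: "nat \<Rightarrow> nat \<Rightarrow> real"
  assumes "\<And>i j. i < m \<Longrightarrow> j < n \<Longrightarrow> \<bar>d i j\<bar> \<le> \<bar>e i j\<bar> + \<delta>"
  shows "(\<Sum>i<m. \<Sum>j<n. (d i j)^2) \<le> 3/2 * (\<Sum>i<m. \<Sum>j<n. (e i j)^2) + 3 * \<delta>^2 * (real m * real n)"
proof -
  have "(\<Sum>i<m. \<Sum>j<n. (d i j)^2) \<le> (\<Sum>i<m. \<Sum>j<n. 3/2 * (e i j)^2 + 3 * \<delta>^2)"
  proof (intro sum_mono)
    fix i j assume "i \<in> {..<m}" "j \<in> {..<n}"
    hence d: "\<bar>d i j\<bar> \<le> \<bar>e i j\<bar> + \<delta>" using assms by auto
    have "(d i j)^2 \<le> (\<bar>e i j\<bar> + \<delta>)^2" using power_mono[OF d, of 2] by simp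
    \<comment> \<open>\<open>(a + \<delta>)\<^sup>2 \<le> 3/2 a\<^sup>2 + 3 \<delta>\<^sup>2\<close> since the difference is \<open>(a - 2\<delta>)\<^sup>2 / 2\<close>\<close>
    also have "\<dots> \<le> 3/2 * (e i j)^2 + 3 * \<delta>^2"
      using zero_le_power2[of "\<bar>e i j\<bar> - 2 * \<delta>"] by (simp add: power2_eq_square algebra_simps)
    finally show "(d i j)^2 \<le> 3/2 * (e i j)^2 + 3 * \<delta>^2" .
  qed
  also have "\<dots> = 3/2 * (\<Sum>i<m. \<Sum>j<n. (e i j)^2) + 3 * \<delta>^2 * (real m * real n)"
    by (simp add: sum.distrib sum_distrib_left)
  finally show ?thesis .
qed

lemma quantize_factorization:
  fixes X :: "real mat" and \<alpha> \<beta> :: "nat \<Rightarrow> nat \<Rightarrow> real"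
  assumes X: "X \<in> carrier_mat m n" "max_norm X \<le> 1" and m: "m > 0" and n: "n > 0"
    and \<alpha>: "\<forall>i<m. \<forall>k\<in>K. \<bar>\<alpha> i k\<bar> \<le> 1" and \<beta>: "\<forall>j<n. \<forall>k\<in>K. \<bar>\<beta> j k\<bar> \<le> B"
    and h: "0 < h1" "h1 \<le> 1" "0 < h2" and \<delta>: "real (card K) * (h1 * B + 2 * h2) \<le> \<delta>"
  obtains R C :: "nat \<Rightarrow> nat \<Rightarrow> int" and A
  where "\<And>i. i < m \<Longrightarrow> R i \<in> K \<rightarrow>\<^sub>E {- \<lceil>1 / h1\<rceil> .. \<lceil>1 / h1\<rceil>}"
    "\<And>j. j < n \<Longrightarrow> C j \<in> K \<rightarrow>\<^sub>E {- \<lceil>B / h2\<rceil> .. \<lceil>B / h2\<rceil>}"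
    "A \<in> carrier_mat m n" "determined_by_codes A R C" "max_norm A \<le> 1"
    "(\<Sum>i<m. \<Sum>j<n. ((X - A) $$ (i,j))^2)
       \<le> 3/2 * (\<Sum>i<m. \<Sum>j<n. (X $$ (i,j) - (\<Sum>k\<in>K. \<alpha> i k * \<beta> j k))^2) + 3 * \<delta>^2 * (real m * real n)"
proof -
  define R where "R i = restrict (\<lambda>k. \<lfloor>\<alpha> i k / h1\<rfloor>) K" for i
  define C where "C j = restrict (\<lambda>k. \<lfloor>\<beta> j k / h2\<rfloor>) K" for j
  define F where "F r c = clip (\<Sum>k\<in>K. (h1 * of_int (r k)) * (h2 * of_int (c k)))" for r c :: "nat \<Rightarrow> int"
  define A where "A = mat m n (\<lambda>(i,j). F (R i) (C j))"
  have A: "A \<in> carrier_mat m n" unfolding A_def by simp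
  have "\<bar>(X - A) $$ (i,j)\<bar> \<le> \<bar>X $$ (i,j) - (\<Sum>k\<in>K. \<alpha> i k * \<beta> j k)\<bar> + \<delta>"
    if ij: "i < m" "j < n" for i j
  proof -
    define S where "S = (\<Sum>k\<in>K. (h1 * of_int \<lfloor>\<alpha> i k / h1\<rfloor>) * (h2 * of_int \<lfloor>\<beta> j k / h2\<rfloor>))"
    have "(X - A) $$ (i,j) = X $$ (i,j) - clip S"
      using ij X unfolding A_def F_def S_def R_def C_def by (auto intro!: arg_cong[of _ _ clip] sum.cong)
    moreover have "\<bar>(\<Sum>k\<in>K. \<alpha> i k * \<beta> j k) - S\<bar> \<le> real (card K) * (h1 * B + 2 * h2)"
      unfolding S_def by (rule rounded_sum_product_error) (use \<alpha> \<beta> ij h in auto)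
    moreover have "\<bar>X $$ (i,j) - clip S\<bar> \<le> \<bar>X $$ (i,j) - S\<bar>"
      using abs_le_max_norm[OF X(1) ij] X(2) by (intro clip_closer) linarith
    ultimately show ?thesis using \<delta> by linarith
  qed
  hence "(\<Sum>i<m. \<Sum>j<n. ((X - A) $$ (i,j))^2)
      \<le> 3/2 * (\<Sum>i<m. \<Sum>j<n. (X $$ (i,j) - (\<Sum>k\<in>K. \<alpha> i k * \<beta> j k))^2) + 3 * \<delta>^2 * (real m * real n)"
    by (rule sum_sq_le_of_pointwise_bound)
  moreover have "R i \<in> K \<rightarrow>\<^sub>E {- \<lceil>1 / h1\<rceil> .. \<lceil>1 / h1\<rceil>}" if "i < m" for i
    unfolding R_def using floor_divide_in_range[of _ 1 h1] \<alpha> that h by auto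
  moreover have "C j \<in> K \<rightarrow>\<^sub>E {- \<lceil>B / h2\<rceil> .. \<lceil>B / h2\<rceil>}" if "j < n" for j
    unfolding C_def using floor_divide_in_range[of _ B h2] \<beta> that h by auto
  moreover have "determined_by_codes A R C" unfolding determined_by_codes_def A_def by simp
  moreover have "max_norm A \<le> 1" by (rule max_norm_le[OF A m n]) (simp add: A_def F_def abs_clip_le_1)
  ultimately show thesis using A that by blast
qed

text \<open>The parameters of the approximation: truncating the singular value expansion at level \<open>t\<close>
  costs \<open>t q = 2/5 \<epsilon>\<^sup>2\<close> in mean square, and grids of mesh \<open>h1\<close> and \<open>h2\<close> for the row and column
  factors cost \<open>\<epsilon>/3\<close> per entry.\<close>
lemma quantization_parameters:
  fixes q \<epsilon> :: real
  assumes q: "q \<ge> 1" and \<epsilon>: "0 < \<epsilon>" "\<epsilon> < 1"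
  defines "t \<equiv> 2 * \<epsilon>^2 / (5 * q)" and "h1 \<equiv> 2 * \<epsilon>^5 / (75 * q^3)" and "h2 \<equiv> \<epsilon>^3 / (30 * q^2)"
  shows "t > 0" "0 < h1" "h1 \<le> 1" "h2 > 0" "t * q = 2/5 * \<epsilon>^2" "q / t = 5/2 * q^2 / \<epsilon>^2"
    "1 / h1 = 75/2 * (q^3 / \<epsilon>^5)" "(1 / t) / h2 = 75 * (q^3 / \<epsilon>^5)"
    "q / t * (h1 * (1 / t) + 2 * h2) = \<epsilon> / 3"
proof -
  have qp: "q > 0" using q by simp
  show "t > 0" "h2 > 0" "0 < h1" unfolding t_def h1_def h2_def using qp \<epsilon> by simp_all
  show "h1 \<le> 1"
    using qp \<epsilon> one_le_power[OF q, of 3] power_le_one[of \<epsilon> 5] unfolding h1_def by (simp add: divide_le_eq)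
  show "t * q = 2/5 * \<epsilon>^2" "q / t = 5/2 * q^2 / \<epsilon>^2"
    unfolding t_def using qp \<epsilon> by (simp_all add: field_simps power2_eq_square)
  show "1 / h1 = 75/2 * (q^3 / \<epsilon>^5)" unfolding h1_def using qp \<epsilon> by (simp add: field_simps)
  show "(1 / t) / h2 = 75 * (q^3 / \<epsilon>^5)" unfolding t_def h2_def using qp \<epsilon>
    by (simp add: field_simps power2_eq_square power3_eq_cube, simp add: eval_nat_numeral)
  show "q / t * (h1 * (1 / t) + 2 * h2) = \<epsilon> / 3" unfolding t_def h1_def h2_def using qp \<epsilon>
    by (simp add: field_simps power2_eq_square power3_eq_cube, simp add: eval_nat_numeral)
qed

lemma quantized_approx:
  fixes X :: "real mat" and q \<epsilon> :: real
  assumes X: "X \<in> carrier_mat m n" and m: "m > 0" and n: "n > 0" and X_max: "max_norm X \<le> 1"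
    and q: "q \<ge> 1" and nuc: "nuclear_norm X \<le> q * sqrt (real m * real n)" and \<epsilon>: "0 < \<epsilon>" "\<epsilon> < 1"
  obtains K :: "nat set" and R C :: "nat \<Rightarrow> nat \<Rightarrow> int" and A
  where "finite K" "real (card K) \<le> 5/2 * q^2 / \<epsilon>^2"
    "\<And>i. i < m \<Longrightarrow> R i \<in> K \<rightarrow>\<^sub>E {- \<lceil>75/2 * (q^3 / \<epsilon>^5)\<rceil> .. \<lceil>75/2 * (q^3 / \<epsilon>^5)\<rceil>}"
    "\<And>j. j < n \<Longrightarrow> C j \<in> K \<rightarrow>\<^sub>E {- \<lceil>75 * (q^3 / \<epsilon>^5)\<rceil> .. \<lceil>75 * (q^3 / \<epsilon>^5)\<rceil>}"
    "A \<in> carrier_mat m n" "determined_by_codes A R C"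
    "max_norm A \<le> 1" "nfrob_norm (X - A) \<le> \<epsilon>"
proof -
  define t where "t = 2 * \<epsilon>^2 / (5 * q)"
  define h1 where "h1 = 2 * \<epsilon>^5 / (75 * q^3)"
  define h2 where "h2 = \<epsilon>^3 / (30 * q^2)"
  note par = quantization_parameters[OF q \<epsilon>, folded t_def h1_def h2_def]
  have X_le: "\<bar>X $$ (i,j)\<bar> \<le> 1" if "i < m" "j < n" for i j
    using abs_le_max_norm[OF X that] X_max by linarith
  obtain K \<alpha> \<beta> where K: "K \<subseteq> {..<n}" "real (card K) \<le> q / t"
      "\<forall>i<m. \<forall>k\<in>K. \<bar>\<alpha> i k\<bar> \<le> 1" "\<forall>j<n. \<forall>k\<in>K. \<bar>\<beta> j k\<bar> \<le> 1 / t"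
    and err: "(\<Sum>i<m. \<Sum>j<n. (X $$ (i,j) - (\<Sum>k\<in>K. \<alpha> i k * \<beta> j k))^2) \<le> t * q * (real m * real n)"
    using low_rank_approx[OF X m n X_le nuc par(1)] by blast
  have "real (card K) * (h1 * (1 / t) + 2 * h2) \<le> \<epsilon> / 3"
    using mult_right_mono[OF K(2), of "h1 * (1 / t) + 2 * h2"] par by simp
  then obtain R C A where R: "\<And>i. i < m \<Longrightarrow> R i \<in> K \<rightarrow>\<^sub>E {- \<lceil>1 / h1\<rceil> .. \<lceil>1 / h1\<rceil>}"
    and C: "\<And>j. j < n \<Longrightarrow> C j \<in> K \<rightarrow>\<^sub>E {- \<lceil>(1 / t) / h2\<rceil> .. \<lceil>(1 / t) / h2\<rceil>}"
    and A: "A \<in> carrier_mat m n" "determined_by_codes A R C" "max_norm A \<le> 1"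
    and A_err: "(\<Sum>i<m. \<Sum>j<n. ((X - A) $$ (i,j))^2)
       \<le> 3/2 * (\<Sum>i<m. \<Sum>j<n. (X $$ (i,j) - (\<Sum>k\<in>K. \<alpha> i k * \<beta> j k))^2) + 3 * (\<epsilon> / 3)^2 * (real m * real n)"
    by (rule quantize_factorization[OF X X_max m n K(3,4) par(2,3,4)]) (rule that)
  note A_err
  also have "3/2 * (\<Sum>i<m. \<Sum>j<n. (X $$ (i,j) - (\<Sum>k\<in>K. \<alpha> i k * \<beta> j k))^2) + 3 * (\<epsilon> / 3)^2 * (real m * real n)
      \<le> 14/15 * (\<epsilon>^2 * (real m * real n))"
    using err unfolding par(5) by (simp add: power2_eq_square algebra_simps)
  also have "\<dots> \<le> \<epsilon>^2 * (real m * real n)" by simp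
  finally have "nfrob_norm (X - A) \<le> \<epsilon>" by (rule nfrob_norm_le[rotated 4]) (use X A m n \<epsilon> in auto)
  moreover have "finite K" using K(1) finite_subset by blast
  moreover have "real (card K) \<le> 5/2 * q^2 / \<epsilon>^2" using K(2) unfolding par(6) .
  ultimately show thesis using that R C A unfolding par(7,8) by blast
qed

section \<open>Sorting rows and columns into blocks\<close>

lemma dim_perm_mat [simp]:
  "dim_row (perm_mat A \<pi> \<tau>) = dim_row A" "dim_col (perm_mat A \<pi> \<tau>) = dim_col A"
  unfolding perm_mat_def by simp_all

lemma sorting_permutation:
  fixes g :: "nat \<Rightarrow> 'a::linorder"
  obtains \<pi> where "\<pi> permutes {..<m}" "mono_on {..<m} (\<lambda>i. g (\<pi> i))"
proof -
  define xs where "xs = sort_key g [0..<m]"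
  have "mset xs = mset [0..<m]" unfolding xs_def by simp
  then obtain \<pi> where \<pi>: "\<pi> permutes {..<m}" and xs: "permute_list \<pi> [0..<m] = xs"
    using mset_eq_permutation[of xs "[0..<m]"] by auto
  have nth: "xs ! i = \<pi> i" if "i < m" for i
    using xs that permutes_lessThan[OF \<pi> that] unfolding permute_list_def by auto
  have "sorted (map g xs)" "length xs = m" using xs unfolding xs_def by auto
  hence "mono_on {..<m} (\<lambda>i. g (\<pi> i))"
    by (intro mono_onI) (use sorted_nth_mono[of "map g xs"] nth in auto)
  with \<pi> show thesis by (rule that)
qed

lemma down_closed_eq_lessThan_card:
  fixes D :: "nat set"
  assumes fin: "finite D" and down: "\<And>i j. i \<in> D \<Longrightarrow> j \<le> i \<Longrightarrow> j \<in> D"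
  shows "D = {..<card D}"
proof (cases "D = {}")
  case False
  have "D \<subseteq> {..<Suc (Max D)}" using Max_ge[OF fin] by (auto simp: less_Suc_eq_le)
  moreover have "{..<Suc (Max D)} \<subseteq> D" using down[OF Max_in[OF fin False]] by (auto simp: less_Suc_eq_le)
  ultimately have "D = {..<Suc (Max D)}" by (rule antisym)
  thus ?thesis by (metis card_lessThan)
qed simp

lemma monotone_interval_partition:
  fixes G :: "nat \<Rightarrow> nat"
  assumes mono: "mono_on {..<m} G" and img: "G ` {..<m} = {..<k}"
  obtains p where "interval_partition p k m" "\<And>t. p t \<le> m" "\<And>t i. p t \<le> i \<Longrightarrow> i < p (Suc t) \<Longrightarrow> G i = t"
proof -
  define p where "p t = card {i\<in>{..<m}. G i < t}" for t
  have p_set: "{i\<in>{..<m}. G i < t} = {..<p t}" for t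
    unfolding p_def
  proof (rule down_closed_eq_lessThan_card)
    fix i j assume "i \<in> {i\<in>{..<m}. G i < t}" "j \<le> i"
    thus "j \<in> {i\<in>{..<m}. G i < t}" using mono_onD[OF mono, of j i] by auto
  qed simp
  have part: "interval_partition p k m" unfolding interval_partition_def
  proof (intro conjI allI impI)
    show "p 0 = 0" unfolding p_def by simp
    have "{i\<in>{..<m}. G i < k} = {..<m}" using img by auto
    thus "p k = m" unfolding p_def by simp
    fix t assume "t < k"
    then obtain i where "i < m" "G i = t" using img by (metis imageE lessThan_iff)
    hence "{i\<in>{..<m}. G i < t} \<subset> {i\<in>{..<m}. G i < Suc t}" by auto
    thus "p t < p (Suc t)" unfolding p_def by (rule psubset_card_mono[rotated]) simp
  qed
  have le: "p t \<le> m" for t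
    using card_mono[of "{..<m}" "{i\<in>{..<m}. G i < t}"] unfolding p_def by auto
  have const: "G i = t" if "p t \<le> i" "i < p (Suc t)" for t i
  proof -
    have "i \<in> {i\<in>{..<m}. G i < Suc t}" using that(2) p_set[of "Suc t"] by simp
    moreover have "i \<notin> {i\<in>{..<m}. G i < t}" using that(1) p_set[of t] by simp
    ultimately show ?thesis by auto
  qed
  show thesis by (rule that[OF part le const])
qed

lemma sort_into_intervals:
  fixes f :: "nat \<Rightarrow> 'a"
  obtains \<pi> p where "\<pi> permutes {..<m}" "interval_partition p (card (f ` {..<m})) m" "\<And>t. p t \<le> m"
    "\<And>t i. p t \<le> i \<Longrightarrow> i < p (Suc t) \<Longrightarrow> f (\<pi> i) = f (\<pi> (p t))"
proof -
  define k where "k = card (f ` {..<m})"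
  obtain h where h: "bij_betw h (f ` {..<m}) {..<k}"
    using ex_bij_betw_finite_nat[of "f ` {..<m}"] unfolding k_def atLeast0LessThan by blast
  obtain \<pi> where \<pi>: "\<pi> permutes {..<m}" and sorted: "mono_on {..<m} (\<lambda>i. h (f (\<pi> i)))"
    using sorting_permutation[of m "\<lambda>i. h (f i)"] by blast
  have "(\<lambda>i. h (f (\<pi> i))) ` {..<m} = h ` f ` \<pi> ` {..<m}" by (simp add: image_image)
  hence "(\<lambda>i. h (f (\<pi> i))) ` {..<m} = {..<k}"
    using h permutes_image[OF \<pi>] by (simp add: bij_betw_def)
  then obtain p where p: "interval_partition p k m" "\<And>t. p t \<le> m"
    and const: "\<And>t i. p t \<le> i \<Longrightarrow> i < p (Suc t) \<Longrightarrow> h (f (\<pi> i)) = t"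
    by (rule monotone_interval_partition[OF sorted]) (rule that)
  have "f (\<pi> i) = f (\<pi> (p t))" if "p t \<le> i" "i < p (Suc t)" for t i
  proof -
    have "i < m" "p t < m" using that p(2)[of "Suc t"] by linarith+
    hence "f (\<pi> i) \<in> f ` {..<m}" "f (\<pi> (p t)) \<in> f ` {..<m}" using permutes_lessThan[OF \<pi>] by auto
    moreover have "h (f (\<pi> i)) = h (f (\<pi> (p t)))" using const[OF that] const[of t "p t"] that by simp
    ultimately show ?thesis using h by (metis bij_betw_def inj_on_def)
  qed
  with \<pi> p show thesis unfolding k_def by (rule that)
qed

lemma const_on_blocks_perm_mat:
  assumes M: "M \<in> carrier_mat m n"
    and \<pi>: "\<pi> permutes {..<m}" "\<And>t. pr t \<le> m"
    and rows: "\<And>t i. pr t \<le> i \<Longrightarrow> i < pr (Suc t) \<Longrightarrow> R (\<pi> i) = R (\<pi> (pr t))"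
    and \<tau>: "\<tau> permutes {..<n}" "\<And>t. pc t \<le> n"
    and cols: "\<And>t j. pc t \<le> j \<Longrightarrow> j < pc (Suc t) \<Longrightarrow> C (\<tau> j) = C (\<tau> (pc t))"
    and codes: "determined_by_codes M R C"
  shows "const_on_blocks (perm_mat M \<pi> \<tau>) pr k pc l"
  unfolding const_on_blocks_def
proof (intro allI impI, elim conjE)
  fix a b i i' j j'
  assume ri: "pr a \<le> i" "i < pr (Suc a)" "pr a \<le> i'" "i' < pr (Suc a)"
    and cj: "pc b \<le> j" "j < pc (Suc b)" "pc b \<le> j'" "j' < pc (Suc b)"
  have ij: "i < m" "i' < m" "j < n" "j' < n" using ri cj \<pi>(2)[of "Suc a"] \<tau>(2)[of "Suc b"] by linarith+
  have "R (\<pi> i) = R (\<pi> i')" using rows[OF ri(1,2)] rows[OF ri(3,4)] by simp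
  moreover have "C (\<tau> j) = C (\<tau> j')" using cols[OF cj(1,2)] cols[OF cj(3,4)] by simp
  ultimately have "M $$ (\<pi> i, \<tau> j) = M $$ (\<pi> i', \<tau> j')"
    using codes[unfolded determined_by_codes_def, rule_format, of "\<pi> i" "\<pi> i'" "\<tau> j" "\<tau> j'"] M
      permutes_lessThan[OF \<pi>(1)] permutes_lessThan[OF \<tau>(1)] ij by simp
  thus "perm_mat M \<pi> \<tau> $$ (i,j) = perm_mat M \<pi> \<tau> $$ (i',j')" using M ij by (simp add: perm_mat_def)
qed

lemma sorted_simult_block_structure:
  fixes A B :: "real mat"
  assumes A: "A \<in> carrier_mat m n" and B: "B \<in> carrier_mat m n"
    and codes: "determined_by_codes A R C" "determined_by_codes B R C"
  obtains \<pi> \<tau> where "\<pi> permutes {..<m}" "\<tau> permutes {..<n}"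
    "simult_block_structure (perm_mat A \<pi> \<tau>) (perm_mat B \<pi> \<tau>) (card (R ` {..<m}) * card (C ` {..<n}))"
proof -
  obtain \<pi> pr where \<pi>: "\<pi> permutes {..<m}" "interval_partition pr (card (R ` {..<m})) m" "\<And>t. pr t \<le> m"
    and rows: "\<And>t i. pr t \<le> i \<Longrightarrow> i < pr (Suc t) \<Longrightarrow> R (\<pi> i) = R (\<pi> (pr t))"
    by (rule sort_into_intervals[of m R]) (rule that)
  obtain \<tau> pc where \<tau>: "\<tau> permutes {..<n}" "interval_partition pc (card (C ` {..<n})) n" "\<And>t. pc t \<le> n"
    and cols: "\<And>t j. pc t \<le> j \<Longrightarrow> j < pc (Suc t) \<Longrightarrow> C (\<tau> j) = C (\<tau> (pc t))"
    by (rule sort_into_intervals[of n C]) (rule that)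
  have "simult_block_structure (perm_mat A \<pi> \<tau>) (perm_mat B \<pi> \<tau>) (card (R ` {..<m}) * card (C ` {..<n}))"
    unfolding simult_block_structure_def
  proof (intro conjI exI)
    show "const_on_blocks (perm_mat A \<pi> \<tau>) pr (card (R ` {..<m})) pc (card (C ` {..<n}))"
      by (rule const_on_blocks_perm_mat) (fact A \<pi>(1,3) rows \<tau>(1,3) cols codes(1))+
    show "const_on_blocks (perm_mat B \<pi> \<tau>) pr (card (R ` {..<m})) pc (card (C ` {..<n}))"
      by (rule const_on_blocks_perm_mat) (fact B \<pi>(1,3) rows \<tau>(1,3) cols codes(2))+
  qed (use A B \<pi>(2) \<tau>(2) in auto)
  with \<pi>(1) \<tau>(1) show thesis by (rule that)
qed

lemma card_image_le_PiE_pairs: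
  fixes f :: "'i \<Rightarrow> ('a \<Rightarrow> int) \<times> ('b \<Rightarrow> int)" and c :: int
  assumes "finite K1" "finite K2" "\<And>i. i \<in> I \<Longrightarrow> f i \<in> (K1 \<rightarrow>\<^sub>E {-c..c}) \<times> (K2 \<rightarrow>\<^sub>E {-c..c})"
  shows "card (f ` I) \<le> nat (2 * c + 1) ^ (card K1 + card K2)"
proof -
  have "finite ((K1 \<rightarrow>\<^sub>E {-c..c}) \<times> (K2 \<rightarrow>\<^sub>E {-c..c}))" using assms(1,2) by (simp add: finite_PiE)
  moreover have "f ` I \<subseteq> (K1 \<rightarrow>\<^sub>E {-c..c}) \<times> (K2 \<rightarrow>\<^sub>E {-c..c})" using assms(3) by blast
  ultimately have "card (f ` I) \<le> card ((K1 \<rightarrow>\<^sub>E {-c..c}) \<times> (K2 \<rightarrow>\<^sub>E {-c..c}))" by (rule card_mono)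
  also have "\<dots> = nat (2 * c + 1) ^ (card K1 + card K2)"
    using assms(1,2) by (simp add: card_cartesian_product card_PiE power_add)
  finally show ?thesis .
qed

lemma block_count_bound:
  fixes q \<epsilon> :: real and r k l :: nat
  assumes q: "q \<ge> 1" and \<epsilon>: "0 < \<epsilon>" "\<epsilon> < 1" and r: "real r \<le> 5 * q^2 / \<epsilon>^2"
    and k: "k \<le> nat (2 * \<lceil>75/2 * (q^3 / \<epsilon>^5)\<rceil> + 1) ^ r"
    and l: "l \<le> nat (2 * \<lceil>75 * (q^3 / \<epsilon>^5)\<rceil> + 1) ^ r"
  shows "real (k * l) \<le> (20000 * q ^ 6 * \<epsilon> powr (-10)) powr (5 * q ^ 2 * \<epsilon> powr (-2))"
proof -
  define c0 where "c0 = q^3 / \<epsilon>^5"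
  have "q^3 \<ge> 1" "\<epsilon>^5 \<le> 1" "\<epsilon>^5 > 0" using q \<epsilon> by (simp_all add: one_le_power power_le_one)
  hence c0: "c0 \<ge> 1" unfolding c0_def by (simp add: le_divide_eq)
  define G1 where "G1 = nat (2 * \<lceil>75/2 * c0\<rceil> + 1)"
  define G2 where "G2 = nat (2 * \<lceil>75 * c0\<rceil> + 1)"
  have G1: "1 \<le> real G1" "real G1 \<le> 78 * c0" unfolding G1_def using c0 by linarith+
  have G2: "1 \<le> real G2" "real G2 \<le> 153 * c0" unfolding G2_def using c0 by linarith+
  define B where "B = 20000 * q ^ 6 * \<epsilon> powr (-10)"
  have c0_sq: "c0^2 = q^6 * \<epsilon> powr (-10)" unfolding c0_def using \<epsilon>
    by (simp add: powr_minus powr_realpow divide_inverse power_mult_distrib power_mult[symmetric] power_inverse)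
  have "real G1 * real G2 \<le> (78 * c0) * (153 * c0)" by (rule mult_mono[OF G1(2) G2(2)]) (use c0 in auto)
  also have "\<dots> \<le> 20000 * c0^2" by (simp add: power2_eq_square)
  finally have "real G1 * real G2 \<le> B" unfolding B_def c0_sq by (simp add: mult.assoc)
  moreover have "1 \<le> real G1 * real G2" using mult_mono[OF G1(1) G2(1)] by simp
  ultimately have B: "1 \<le> B" "real G1 * real G2 \<le> B" by linarith+
  have "\<epsilon> powr (-2) = 1 / \<epsilon>^2" using \<epsilon> by (simp add: powr_minus powr_realpow divide_inverse)
  hence r': "real r \<le> 5 * q ^ 2 * \<epsilon> powr (-2)" using r by simp
  have "real (k * l) \<le> real (G1 ^ r * G2 ^ r)"
    using mult_le_mono[OF k l] unfolding G1_def G2_def c0_def by (simp only: of_nat_le_iff)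
  also have "\<dots> = (real G1 * real G2) ^ r" by (simp add: power_mult_distrib)
  also have "\<dots> \<le> B ^ r" by (rule power_mono[OF B(2)]) simp
  also have "\<dots> = B powr (real r)" using B(1) by (simp add: powr_realpow)
  also have "\<dots> \<le> B powr (5 * q ^ 2 * \<epsilon> powr (-2))" by (rule powr_mono[OF r' B(1)])
  finally show ?thesis unfolding B_def .
qed

lemma simultaneous_quantized_approx:
  fixes X Y :: "real mat" and q \<epsilon> :: real
  assumes m: "m > 0" and n: "n > 0" and X: "X \<in> carrier_mat m n" and Y: "Y \<in> carrier_mat m n"
    and "max_norm X \<le> 1" "max_norm Y \<le> 1" and q: "q \<ge> 1"
    and "nuclear_norm X \<le> q * sqrt (real m * real n)" "nuclear_norm Y \<le> q * sqrt (real m * real n)"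
    and \<epsilon>: "0 < \<epsilon>" "\<epsilon> < 1"
  obtains R C :: "nat \<Rightarrow> (nat \<Rightarrow> int) \<times> (nat \<Rightarrow> int)" and AX AY
  where "AX \<in> carrier_mat m n" "determined_by_codes AX R C" "max_norm AX \<le> 1" "nfrob_norm (X - AX) \<le> \<epsilon>"
    "AY \<in> carrier_mat m n" "determined_by_codes AY R C" "max_norm AY \<le> 1" "nfrob_norm (Y - AY) \<le> \<epsilon>"
    "real (card (R ` {..<m}) * card (C ` {..<n}))
       \<le> (20000 * q ^ 6 * \<epsilon> powr (-10)) powr (5 * q ^ 2 * \<epsilon> powr (-2))"
proof -
  let ?c1 = "\<lceil>75/2 * (q^3 / \<epsilon>^5)\<rceil>" and ?c2 = "\<lceil>75 * (q^3 / \<epsilon>^5)\<rceil>"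
  obtain KX :: "nat set" and RX CX AX where KX: "finite KX" "real (card KX) \<le> 5/2 * q^2 / \<epsilon>^2"
    and RX: "\<And>i. i < m \<Longrightarrow> RX i \<in> KX \<rightarrow>\<^sub>E {-?c1..?c1}" and CX: "\<And>j. j < n \<Longrightarrow> CX j \<in> KX \<rightarrow>\<^sub>E {-?c2..?c2}"
    and AX: "AX \<in> carrier_mat m n" "determined_by_codes AX RX CX" "max_norm AX \<le> 1" "nfrob_norm (X - AX) \<le> \<epsilon>"
    by (rule quantized_approx[OF X m n assms(5) q assms(8) \<epsilon>]) (rule that)
  obtain KY :: "nat set" and RY CY AY where KY: "finite KY" "real (card KY) \<le> 5/2 * q^2 / \<epsilon>^2"
    and RY: "\<And>i. i < m \<Longrightarrow> RY i \<in> KY \<rightarrow>\<^sub>E {-?c1..?c1}" and CY: "\<And>j. j < n \<Longrightarrow> CY j \<in> KY \<rightarrow>\<^sub>E {-?c2..?c2}"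
    and AY: "AY \<in> carrier_mat m n" "determined_by_codes AY RY CY" "max_norm AY \<le> 1" "nfrob_norm (Y - AY) \<le> \<epsilon>"
    by (rule quantized_approx[OF Y m n assms(6) q assms(9) \<epsilon>]) (rule that)
  define R where "R i = (RX i, RY i)" for i
  define C where "C j = (CX j, CY j)" for j
  have codes: "determined_by_codes AX R C" "determined_by_codes AY R C"
    using AX(2) AY(2) unfolding determined_by_codes_def R_def C_def prod.inject by blast+
  have card_R: "card (R ` {..<m}) \<le> nat (2 * ?c1 + 1) ^ (card KX + card KY)"
    unfolding R_def by (rule card_image_le_PiE_pairs[OF KX(1) KY(1)]) (use RX RY in auto)
  have card_C: "card (C ` {..<n}) \<le> nat (2 * ?c2 + 1) ^ (card KX + card KY)"
    unfolding C_def by (rule card_image_le_PiE_pairs[OF KX(1) KY(1)]) (use CX CY in auto)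
  have "5/2 * q^2 / \<epsilon>^2 + 5/2 * q^2 / \<epsilon>^2 = 5 * q^2 / \<epsilon>^2" by simp
  hence "real (card KX + card KY) \<le> 5 * q^2 / \<epsilon>^2" using KX(2) KY(2) by simp
  note count = block_count_bound[OF q \<epsilon> this card_R card_C]
  show thesis using AX(1) codes(1) AX(3,4) AY(1) codes(2) AY(3,4) count by (rule that)
qed

theorem lemma7p2:
  fixes X Y :: "real mat" and m n :: nat and q \<epsilon> :: real
  assumes "m > 0" and "n > 0"
    and "X \<in> carrier_mat m n" and "Y \<in> carrier_mat m n"
    and "max_norm X \<le> 1" and "max_norm Y \<le> 1"
    and "q \<ge> 1"
    and "nuclear_norm X \<le> q * sqrt (real m * real n)"
    and "nuclear_norm Y \<le> q * sqrt (real m * real n)"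
    and "0 < \<epsilon>" and "\<epsilon> < 1"
  shows "\<exists>A B N \<pi> \<tau>. A \<in> carrier_mat m n \<and> B \<in> carrier_mat m n \<and>
           simult_block_structure A B N \<and>
           real N \<le> (20000 * q ^ 6 * \<epsilon> powr (-10)) powr (5 * q ^ 2 * \<epsilon> powr (-2)) \<and>
           \<pi> permutes {..<m} \<and> \<tau> permutes {..<n} \<and>
           nfrob_norm (perm_mat X \<pi> \<tau> - A) \<le> \<epsilon> \<and>
           nfrob_norm (perm_mat Y \<pi> \<tau> - B) \<le> \<epsilon> \<and>
           max_norm A \<le> 1 \<and> max_norm B \<le> 1"
proof -
  obtain R C :: "nat \<Rightarrow> (nat \<Rightarrow> int) \<times> (nat \<Rightarrow> int)" and AX AY
    where AX: "AX \<in> carrier_mat m n" "determined_by_codes AX R C" "max_norm AX \<le> 1" "nfrob_norm (X - AX) \<le> \<epsilon>"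
      and AY: "AY \<in> carrier_mat m n" "determined_by_codes AY R C" "max_norm AY \<le> 1" "nfrob_norm (Y - AY) \<le> \<epsilon>"
      and count: "real (card (R ` {..<m}) * card (C ` {..<n}))
        \<le> (20000 * q ^ 6 * \<epsilon> powr (-10)) powr (5 * q ^ 2 * \<epsilon> powr (-2))"
    by (rule simultaneous_quantized_approx[OF assms]) (rule that)
  obtain \<pi> \<tau> where \<pi>: "\<pi> permutes {..<m}" and \<tau>: "\<tau> permutes {..<n}" and blocks:
      "simult_block_structure (perm_mat AX \<pi> \<tau>) (perm_mat AY \<pi> \<tau>) (card (R ` {..<m}) * card (C ` {..<n}))"
    by (rule sorted_simult_block_structure[OF AX(1) AY(1) AX(2) AY(2)]) (rule that)
  note m = assms(1) and n = assms(2) and X = assms(3) and Y = assms(4)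
  show ?thesis
  proof (rule exI[of _ "perm_mat AX \<pi> \<tau>"], rule exI[of _ "perm_mat AY \<pi> \<tau>"],
      rule exI[of _ "card (R ` {..<m}) * card (C ` {..<n})"], rule exI[of _ \<pi>], rule exI[of _ \<tau>],
      intro conjI)
    show "nfrob_norm (perm_mat X \<pi> \<tau> - perm_mat AX \<pi> \<tau>) \<le> \<epsilon>"
      using AX(4) nfrob_norm_perm_mat_minus[OF X AX(1) \<pi> \<tau>] by simp
    show "nfrob_norm (perm_mat Y \<pi> \<tau> - perm_mat AY \<pi> \<tau>) \<le> \<epsilon>"
      using AY(4) nfrob_norm_perm_mat_minus[OF Y AY(1) \<pi> \<tau>] by simp
    show "max_norm (perm_mat AX \<pi> \<tau>) \<le> 1" using AX(3) max_norm_perm_mat_le[OF AX(1) m n \<pi> \<tau>] by simp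
    show "max_norm (perm_mat AY \<pi> \<tau>) \<le> 1" using AY(3) max_norm_perm_mat_le[OF AY(1) m n \<pi> \<tau>] by simp
  qed (use AX(1) AY(1) blocks count \<pi> \<tau> in \<open>auto simp: perm_mat_def\<close>)
qed

end
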